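(* Let $\alpha$ be a parameter and $M_1=(n_1',\dots,n_{r_4}'\,|\,n_1,\dots,n_{r_1})$, $M_2=(m_1',\dots,m_{r_3}'\,|\,m_1,\dots,m_{r_2})$ Maya diagrams. Then, up to a factor $\pm1$: (a) If $n_{r_1}=0$, then $\Omega_{M_1,M_2}[\widetilde h^{\alpha}(x,\lambda)]=\left((-\alpha)\prod_{i=1}^{r_3}(m_i'-\alpha)\prod_{i=1}^{r_4}(n_i'+1)\right)\Omega_{M_1-1,M_2}[\widetilde h^{\alpha+1}(x,\lambda-1)]$. (b) If $n_{r_4}'=0$, then $\Omega_{M_1,M_2}[\widetilde h^{\alpha}(x,\lambda)]=\left(\frac{\lambda+1}{1-\alpha}\prod_{i=1}^{r_1}(n_i+1)\prod_{i=1}^{r_2}(m_i+\alpha)\right)\Omega_{M_1+1,M_2}[\widetilde h^{\alpha-1}(x,\lambda+1)]$. (c) If $m_{r_2}=0$, then $\Omega_{M_1,M_2}[\widetilde h^{\alpha}(x,\lambda)]=\left((-\alpha)\prod_{i=1}^{r_3}(m_i'+1)\prod_{i=1}^{r_4}(n_i'-\alpha)\right)\Omega_{M_1,M_2-1}[\widetilde h^{\alpha+1}(x,\lambda)]$. (d) If $m_{r_3}'=0$, then $\Omega_{M_1,M_2}[\widetilde h^{\alpha}(x,\lambda)]=\left(\frac{-\lambda-\alpha}{1-\alpha}\prod_{i=1}^{r_1}(n_i+\alpha)\prod_{i=1}^{r_2}(m_i+1)\right)\Omega_{M_1,M_2+1}[\widetilde h^{\alpha-1}(x,\lambda)]$.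
   Context: $L_n^{\beta}$ is the classical Laguerre polynomial; $M(a,b,x)={}_1F_1(a;b;x)$; $\widetilde h^{\beta}(x,\lambda)=x^{-\beta}M(-\lambda-\beta,1-\beta,x)$. A Maya diagram is a set $M\subset\mathbb{Z}$ containing finitely many nonnegative integers and all but finitely many negative integers; it is encoded as $M=(n_1',\dots,n_{r_4}'\,|\,n_1,\dots,n_{r_1})$ where $n_1>\dots>n_{r_1}\ge0$ are the nonnegative elements of $M$ and $n_1'>\dots>n_{r_4}'\ge0$ are such that $-n_j'-1$ are exactly the negative integers not in $M$. For $t\in\mathbb{Z}$, $M+t=\{k+t:k\in M\}$. For Maya diagrams $M_1=(n'|n)$, $M_2=(m'|m)$ and a parameter $\beta$, set $r=r_1+r_2+r_3+r_4$, seed functions $f_j=L^{\beta}_{n_j}(x)$ ($1\le j\le r_1$), $f_{r_1+j}=e^xL^{\beta}_{m_j}(-x)$ ($1\le j\le r_2$), $f_{r_1+r_2+j}=x^{-\beta}L^{-\beta}_{m_j'}(x)$ ($1\le j\le r_3$), $f_{r_1+r_2+r_3+j}=e^xx^{-\beta}L^{-\beta}_{n_j'}(-x)$ ($1\le j\le r_4$), and $$\Omega_{M_1,M_2}[\widetilde h^{\beta}(x,\lambda)]=e^{-(r_2+r_4)x}x^{(\beta+r_1+r_2)(r_3+r_4+1)}\,\mathrm{Wr}\left[f_1,\dots,f_r,\widetilde h^{\beta}(\cdot,\lambda)\right](x).$$ On the right-hand sides the same construction is used with the shifted Maya diagrams (re-encoded) and the indicated parameter. The paper ignores overall factors $(-1)^d$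 throughout. *)

theory Defs
  imports "HOL-Analysis.Analysis"
begin

definition maya :: "int set \<Rightarrow> bool" where
  "maya M \<longleftrightarrow> finite {k \<in> M. k \<ge> 0} \<and> finite {k. k < 0 \<and> k \<notin> M}"

text \<open>Encoding M = (n'_1,...,n'_r4 | n_1,...,n_r1): both lists strictly decreasing.\<close>
definition maya_pos :: "int set \<Rightarrow> nat list" where
  "maya_pos M = rev (sorted_list_of_set {n::nat. int n \<in> M})"

definition maya_neg :: "int set \<Rightarrow> nat list" where
  "maya_neg M = rev (sorted_list_of_set {n::nat. - int n - 1 \<notin> M})"

definition maya_shift :: "int set \<Rightarrow> int \<Rightarrow> int set" where
  "maya_shift M t = (\<lambda>k. k + t) ` M"

definition laguerre :: "nat \<Rightarrow> real \<Rightarrow> real \<Rightarrow> real" where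
  "laguerre n b x = (\<Sum>k\<le>n. (-1)^k * (pochhammer (b + real k + 1) (n - k) / fact (n - k))
                              * x ^ k / fact k)"

definition kummerM :: "real \<Rightarrow> real \<Rightarrow> real \<Rightarrow> real" where
  "kummerM a b x = (\<Sum>k. pochhammer a k / pochhammer b k * x ^ k / fact k)"

definition htilde :: "real \<Rightarrow> real \<Rightarrow> real \<Rightarrow> real" where
  "htilde b lam x = x powr (- b) * kummerM (- lam - b) (1 - b) x"

definition wronskian :: "(real \<Rightarrow> real) list \<Rightarrow> real \<Rightarrow> real" where
  "wronskian fs x = (\<Sum>p | p permutes {..<length fs}.
      of_int (sign p) * (\<Prod>i<length fs. (deriv ^^ i) (fs ! (p i)) x))"

definition seed_functions :: "int set \<Rightarrow> int set \<Rightarrow> real \<Rightarrow> (real \<Rightarrow> real) list" where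
  "seed_functions M1 M2 b =
     map (\<lambda>n x. laguerre n b x) (maya_pos M1)
   @ map (\<lambda>m x. exp x * laguerre m b (- x)) (maya_pos M2)
   @ map (\<lambda>m' x. x powr (- b) * laguerre m' (- b) x) (maya_neg M2)
   @ map (\<lambda>n' x. exp x * x powr (- b) * laguerre n' (- b) (- x)) (maya_neg M1)"

definition Omega :: "int set \<Rightarrow> int set \<Rightarrow> real \<Rightarrow> (real \<Rightarrow> real) \<Rightarrow> real \<Rightarrow> real" where
  "Omega M1 M2 b g x =
     (let r1 = length (maya_pos M1); r2 = length (maya_pos M2);
          r3 = length (maya_neg M2); r4 = length (maya_neg M1)
      in exp (- real (r2 + r4) * x) * x powr ((b + real r1 + real r2) * real (r3 + r4 + 1))
         * wronskian (seed_functions M1 M2 b @ [g]) x)"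

end

theory Submission
  imports Defs "Jordan_Normal_Form.Determinant" "HOL-Real_Asymp.Real_Asymp"
begin

(* In each of the four cases the shift removes a seed function that is a pure weight
   phi(x) = exp(d0 x) x^e0, namely L_0 = 1, e^x, x^(-alpha) or e^x x^(-alpha).  Dividing every
   column of the Wronskian by phi turns that column into the constant 1, and expanding along it
   replaces every other column f by (f/phi)'.  By the contiguous relations of the Laguerre
   polynomials and of Kummer's function, each (f/phi)' equals c psi g with a constant c, a common
   weight psi(x) = exp(d1 x) x^e1 and g the matching seed function of the shifted Maya diagrams
   with shifted parameter.  The powers of phi and psi pulled out of the Wronskians exactly
   account for the change of the prefactor exp(-(r2 + r4) x) x^((beta + r1 + r2)(r3 + r4 + 1))
   of Omega, and the product of the constants c is the stated factor up to sign. *)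

section \<open>Smooth functions on the positive half-line\<close>

definition smooth_on_pos :: "(real \<Rightarrow> real) \<Rightarrow> bool" where
  "smooth_on_pos f \<longleftrightarrow> (\<forall>i. \<forall>x>0. (deriv ^^ i) f differentiable (at x))"

lemma eventually_pos_nhds: "0 < (x::real) \<Longrightarrow> eventually (\<lambda>y. 0 < y) (nhds x)"
  using eventually_nhds_in_open[of "{0<..}" x] by auto

lemma higher_deriv_Suc_inner: "(deriv ^^ Suc i) f = (deriv ^^ i) (deriv f)"
  by (simp add: funpow_Suc_right del: funpow.simps)

lemma higher_deriv_cong_pos:
  fixes f g :: "real \<Rightarrow> real"
  assumes "\<And>y. 0 < y \<Longrightarrow> f y = g y" and "0 < x"
  shows "(deriv ^^ i) f x = (deriv ^^ i) g x"
  using assms(2)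
proof (induction i arbitrary: x)
  case 0
  then show ?case using assms(1) by simp
next
  case (Suc i)
  have "eventually (\<lambda>y. (deriv ^^ i) f y = (deriv ^^ i) g y) (nhds x)"
    using eventually_pos_nhds[OF Suc.prems] by (rule eventually_mono) (use Suc.IH in auto)
  then show ?case by (simp add: deriv_cong_ev)
qed

lemma smooth_on_pos_has_derivative:
  "smooth_on_pos f \<Longrightarrow> 0 < x \<Longrightarrow> ((deriv ^^ i) f has_real_derivative (deriv ^^ Suc i) f x) (at x)"
  unfolding smooth_on_pos_def by (simp add: DERIV_deriv_iff_real_differentiable)

lemma has_real_derivative_transform_pos:
  fixes f g :: "real \<Rightarrow> real"
  assumes "(f has_real_derivative D) (at x)" and "\<And>y. 0 < y \<Longrightarrow> f y = g y" and "0 < x"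
  shows "(g has_real_derivative D) (at x)"
  by (rule has_field_derivative_transform_within_open[OF assms(1), of "{0<..}"]) (use assms in auto)

lemma smooth_on_pos_cong:
  assumes "\<And>y. 0 < y \<Longrightarrow> f y = g y" and "smooth_on_pos f"
  shows "smooth_on_pos g"
  unfolding smooth_on_pos_def
proof (intro allI impI)
  fix i and x :: real
  assume x: "0 < x"
  have "((deriv ^^ i) g has_real_derivative (deriv ^^ Suc i) f x) (at x)"
    by (rule has_real_derivative_transform_pos[OF smooth_on_pos_has_derivative[OF assms(2) x]])
       (use higher_deriv_cong_pos[OF assms(1)] x in auto)
  then show "(deriv ^^ i) g differentiable (at x)" using real_differentiable_def by blast
qed

lemma smooth_on_posI_closed_class:
  assumes closed: "\<And>f. P f \<Longrightarrow> \<exists>f'. P f' \<and> (\<forall>x>0. (f has_real_derivative f' x) (at x))"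
    and "P f"
  shows "smooth_on_pos f"
proof -
  have "\<exists>g. P g \<and> (\<forall>x>0. (deriv ^^ i) f x = g x)" for i
  proof (induction i)
    case 0
    then show ?case using \<open>P f\<close> by auto
  next
    case (Suc i)
    then obtain g where g: "P g" "\<forall>x>0. (deriv ^^ i) f x = g x" by blast
    obtain g' where g': "P g'" "\<forall>x>0. (g has_real_derivative g' x) (at x)"
      using closed[OF g(1)] by blast
    have "(deriv ^^ Suc i) f x = g' x" if "0 < x" for x
    proof -
      have "((deriv ^^ i) f has_real_derivative g' x) (at x)"
        by (rule has_real_derivative_transform_pos[of g]) (use g g' that in auto)
      then show ?thesis by (simp add: DERIV_imp_deriv)
    qed
    then show ?case using g' by blast
  qed
  then show ?thesis
    unfolding smooth_on_pos_def
    by (metis closed has_real_derivative_transform_pos real_differentiable_def)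
qed

lemma binomial_sum_Suc:
  fixes F G :: "nat \<Rightarrow> 'a::comm_semiring_1"
  shows "(\<Sum>i\<le>Suc n. of_nat (Suc n choose i) * F i * G (Suc n - i)) =
         (\<Sum>i\<le>n. of_nat (n choose i) * (F (Suc i) * G (n - i) + F i * G (Suc (n - i))))"
proof -
  have "(\<Sum>i\<le>Suc n. of_nat (Suc n choose i) * F i * G (Suc n - i)) =
        F 0 * G (Suc n) + (\<Sum>i\<le>n. of_nat (Suc n choose Suc i) * F (Suc i) * G (n - i))"
    by (subst sum.atMost_Suc_shift) simp
  also have "\<dots> = F 0 * G (Suc n) + (\<Sum>i\<le>n. of_nat (n choose Suc i) * F (Suc i) * G (n - i))
          + (\<Sum>i\<le>n. of_nat (n choose i) * F (Suc i) * G (n - i))"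
    by (simp add: sum.distrib algebra_simps)
  also have "F 0 * G (Suc n) + (\<Sum>i\<le>n. of_nat (n choose Suc i) * F (Suc i) * G (n - i)) =
             (\<Sum>i\<le>Suc n. of_nat (n choose i) * F i * G (Suc n - i))"
    unfolding sum.atMost_Suc_shift by simp
  also have "\<dots> = (\<Sum>i\<le>n. of_nat (n choose i) * F i * G (Suc (n - i)))"
    by (auto simp: Suc_diff_le binomial_eq_0 intro: sum.cong)
  finally show ?thesis by (simp add: sum.distrib algebra_simps)
qed

lemma higher_deriv_mult_pos:
  assumes f: "smooth_on_pos f" and g: "smooth_on_pos g" and "0 < x"
  shows "(deriv ^^ n) (\<lambda>w. f w * g w) x =
           (\<Sum>i\<le>n. of_nat (n choose i) * (deriv ^^ i) f x * (deriv ^^ (n - i)) g x)"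
  using \<open>0 < x\<close>
proof (induction n arbitrary: x)
  case 0
  then show ?case by simp
next
  case (Suc n z)
  have df: "\<And>i. ((deriv ^^ i) f has_field_derivative (deriv ^^ Suc i) f z) (at z)"
   and dg: "\<And>i. ((deriv ^^ i) g has_field_derivative (deriv ^^ Suc i) g z) (at z)"
    using smooth_on_pos_has_derivative[OF f Suc.prems] smooth_on_pos_has_derivative[OF g Suc.prems]
    by auto
  have "((deriv ^^ n) (\<lambda>w. f w * g w) has_field_derivative
         (\<Sum>i\<le>n. of_nat (n choose i) * ((deriv ^^ Suc i) f z * (deriv ^^ (n - i)) g z
                                          + (deriv ^^ i) f z * (deriv ^^ Suc (n - i)) g z))) (at z)"
    by (rule has_real_derivative_transform_pos
          [of "\<lambda>w. \<Sum>i\<le>n. of_nat (n choose i) * (deriv ^^ i) f w * (deriv ^^ (n - i)) g w"])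
       (auto intro!: derivative_eq_intros df dg simp: algebra_simps Suc.IH Suc.prems)
  also have "(\<Sum>i\<le>n. of_nat (n choose i) * ((deriv ^^ Suc i) f z * (deriv ^^ (n - i)) g z
                                          + (deriv ^^ i) f z * (deriv ^^ Suc (n - i)) g z))
           = (\<Sum>i\<le>Suc n. of_nat (Suc n choose i) * (deriv ^^ i) f z * (deriv ^^ (Suc n - i)) g z)"
    using binomial_sum_Suc[of n "\<lambda>i. (deriv ^^ i) f z" "\<lambda>i. (deriv ^^ i) g z"] by simp
  finally have "((deriv ^^ n) (\<lambda>w. f w * g w) has_field_derivative \<dots>) (at z)" .
  then show ?case by (simp add: DERIV_imp_deriv)
qed

lemma smooth_on_pos_mult:
  assumes f: "smooth_on_pos f" and g: "smooth_on_pos g"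
  shows "smooth_on_pos (\<lambda>w. f w * g w)"
  unfolding smooth_on_pos_def
proof (intro allI impI)
  fix n and x :: real
  assume x: "0 < x"
  have "((\<lambda>w. \<Sum>i\<le>n. of_nat (n choose i) * (deriv ^^ i) f w * (deriv ^^ (n - i)) g w) has_real_derivative
         (\<Sum>i\<le>n. of_nat (n choose i) * ((deriv ^^ Suc i) f x * (deriv ^^ (n - i)) g x
                                          + (deriv ^^ i) f x * (deriv ^^ Suc (n - i)) g x))) (at x)"
    by (auto intro!: derivative_eq_intros smooth_on_pos_has_derivative[OF f x]
          smooth_on_pos_has_derivative[OF g x] simp: algebra_simps)
  then have "((deriv ^^ n) (\<lambda>w. f w * g w) has_real_derivative
         (\<Sum>i\<le>n. of_nat (n choose i) * ((deriv ^^ Suc i) f x * (deriv ^^ (n - i)) g x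
                                          + (deriv ^^ i) f x * (deriv ^^ Suc (n - i)) g x))) (at x)"
    by (rule has_real_derivative_transform_pos) (use x higher_deriv_mult_pos[OF f g] in auto)
  then show "(deriv ^^ n) (\<lambda>w. f w * g w) differentiable (at x)"
    using real_differentiable_def by blast
qed

lemma higher_deriv_cmult_pos:
  assumes g: "smooth_on_pos g" and "0 < x"
  shows "(deriv ^^ i) (\<lambda>y. c * g y) x = c * (deriv ^^ i) g x"
  using \<open>0 < x\<close>
proof (induction i arbitrary: x)
  case 0
  then show ?case by simp
next
  case (Suc i)
  have "(deriv ^^ Suc i) (\<lambda>y. c * g y) x = deriv (\<lambda>y. c * (deriv ^^ i) g y) x"
    using eventually_pos_nhds[OF Suc.prems] Suc.IH
    by (auto intro!: deriv_cong_ev elim!: eventually_mono)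
  also have "\<dots> = c * (deriv ^^ Suc i) g x"
    using smooth_on_pos_has_derivative[OF g Suc.prems, of i]
    by (intro DERIV_imp_deriv) (auto intro!: derivative_eq_intros)
  finally show ?case .
qed

lemma higher_deriv_const: "(deriv ^^ i) (\<lambda>_. c) = (\<lambda>_. if i = 0 then c else (0::real))"
  by (induction i) (auto simp: deriv_const)

lemma smooth_on_pos_const: "smooth_on_pos (\<lambda>_. c)"
  unfolding smooth_on_pos_def higher_deriv_const by simp

section \<open>Wronskians\<close>

definition wronskian_mat :: "(real \<Rightarrow> real) list \<Rightarrow> real \<Rightarrow> real mat" where
  "wronskian_mat fs x = mat (length fs) (length fs) (\<lambda>(i, j). (deriv ^^ i) (fs ! j) x)"

lemma wronskian_mat_carrier: "wronskian_mat fs x \<in> carrier_mat (length fs) (length fs)"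
  unfolding wronskian_mat_def by auto

lemma wronskian_eq_det: "wronskian fs x = det (wronskian_mat fs x)"
proof -
  have "det (wronskian_mat fs x) = (\<Sum>p | p permutes {0..<length fs}.
      signof p * (\<Prod>i = 0..<length fs. wronskian_mat fs x $$ (i, p i)))"
    by (rule det_def'[OF wronskian_mat_carrier])
  also have "\<dots> = wronskian fs x"
    unfolding wronskian_def atLeast0LessThan
  proof (rule sum.cong[OF refl])
    fix p
    assume "p \<in> {p. p permutes {..<length fs}}"
    then have "i < length fs \<Longrightarrow> p i < length fs" for i
      using permutes_in_image by fastforce
    then show "signof p * (\<Prod>i<length fs. wronskian_mat fs x $$ (i, p i)) =
        of_int (sign p) * (\<Prod>i<length fs. (deriv ^^ i) (fs ! p i) x)"
      by (simp add: wronskian_mat_def)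
  qed
  finally show ?thesis by simp
qed

lemma wronskian_cong_pos:
  assumes "list_all2 (\<lambda>f g. \<forall>y>0. f y = g y) fs gs" and "0 < x"
  shows "wronskian fs x = wronskian gs x"
proof -
  have "wronskian_mat fs x = wronskian_mat gs x"
    unfolding wronskian_mat_def using assms
    by (intro eq_matI) (auto simp: list_all2_conv_all_nth intro!: higher_deriv_cong_pos)
  then show ?thesis by (simp add: wronskian_eq_det)
qed

text \<open>By the Leibniz rule the Wronskian matrix of \<open>\<phi> g\<^sub>j\<close> is the Wronskian matrix of the
  \<open>g\<^sub>j\<close> multiplied from the left by a lower triangular matrix with diagonal \<open>\<phi>\<close>.\<close>

lemma wronskian_mult_common:
  assumes \<phi>: "smooth_on_pos \<phi>" and gs: "\<And>g. g \<in> set gs \<Longrightarrow> smooth_on_pos g" and x: "0 < x"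
  shows "wronskian (map (\<lambda>g y. \<phi> y * g y) gs) x = \<phi> x ^ length gs * wronskian gs x"
proof -
  define n where "n = length gs"
  define L where
    "L = mat n n (\<lambda>(i, k). if k \<le> i then of_nat (i choose k) * (deriv ^^ (i - k)) \<phi> x else 0)"
  have L: "L \<in> carrier_mat n n" unfolding L_def by auto
  have W: "wronskian_mat gs x \<in> carrier_mat n n" using wronskian_mat_carrier n_def by auto
  have "wronskian_mat (map (\<lambda>g y. \<phi> y * g y) gs) x = L * wronskian_mat gs x"
  proof (rule eq_matI)
    fix i j
    assume "i < dim_row (L * wronskian_mat gs x)" and "j < dim_col (L * wronskian_mat gs x)"
    then have i: "i < n" and j: "j < n" using L W by auto
    have "(L * wronskian_mat gs x) $$ (i, j) =
        (\<Sum>k<n. (if k \<le> i then of_nat (i choose k) * (deriv ^^ (i - k)) \<phi> x else 0)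
                 * (deriv ^^ k) (gs ! j) x)"
      using i j L W
      by (simp add: L_def wronskian_mat_def n_def[symmetric] scalar_prod_def atLeast0LessThan)
    also have "\<dots> = (\<Sum>k\<le>i. of_nat (i choose k) * (deriv ^^ (i - k)) \<phi> x * (deriv ^^ k) (gs ! j) x)"
      by (rule sum.mono_neutral_cong_right) (use i in auto)
    also have "\<dots> = (deriv ^^ i) (\<lambda>w. (gs ! j) w * \<phi> w) x"
      using gs j n_def by (subst higher_deriv_mult_pos[OF _ \<phi> x]) (auto simp: algebra_simps)
    finally show "wronskian_mat (map (\<lambda>g y. \<phi> y * g y) gs) x $$ (i, j) =
        (L * wronskian_mat gs x) $$ (i, j)"
      using i j by (simp add: wronskian_mat_def n_def mult.commute)
  qed (use L W n_def in \<open>auto simp: wronskian_mat_def\<close>)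
  moreover have "det L = \<phi> x ^ n"
    by (subst det_lower_triangular[OF _ L]) (auto simp: L_def prod_list_diag_prod)
  ultimately show ?thesis
    unfolding wronskian_eq_det using det_mult[OF L W] n_def by simp
qed

lemma wronskian_scale_columns:
  assumes "\<And>cg. cg \<in> set cgs \<Longrightarrow> smooth_on_pos (snd cg)" and x: "0 < x"
  shows "wronskian (map (\<lambda>(c, g) y. c * g y) cgs) x =
    prod_list (map fst cgs) * wronskian (map snd cgs) x"
proof -
  define n where "n = length cgs"
  define D where "D = mat n n (\<lambda>(i, j). if i = j then fst (cgs ! i) else 0)"
  have D: "D \<in> carrier_mat n n" unfolding D_def by auto
  have W: "wronskian_mat (map snd cgs) x \<in> carrier_mat n n"
    using wronskian_mat_carrier[of "map snd cgs"] n_def by simp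
  have "wronskian_mat (map (\<lambda>(c, g) y. c * g y) cgs) x = wronskian_mat (map snd cgs) x * D"
  proof (rule eq_matI)
    fix i j
    assume "i < dim_row (wronskian_mat (map snd cgs) x * D)"
      and "j < dim_col (wronskian_mat (map snd cgs) x * D)"
    then have i: "i < n" and j: "j < n" using D W by auto
    have "(wronskian_mat (map snd cgs) x * D) $$ (i, j) =
        (\<Sum>k<n. (deriv ^^ i) (snd (cgs ! k)) x * (if k = j then fst (cgs ! j) else 0))"
      using i j D W
      by (auto simp: D_def wronskian_mat_def n_def[symmetric] scalar_prod_def atLeast0LessThan
               intro!: sum.cong)
    also have "\<dots> = fst (cgs ! j) * (deriv ^^ i) (snd (cgs ! j)) x"
      using j by (simp add: if_distrib[of "(*) _"] cong: if_cong)
    also have "\<dots> = (deriv ^^ i) (\<lambda>y. fst (cgs ! j) * snd (cgs ! j) y) x"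
      using assms(1)[OF nth_mem] j x n_def by (intro higher_deriv_cmult_pos[symmetric]) auto
    finally show "wronskian_mat (map (\<lambda>(c, g) y. c * g y) cgs) x $$ (i, j) =
        (wronskian_mat (map snd cgs) x * D) $$ (i, j)"
      using i j by (simp add: wronskian_mat_def n_def case_prod_beta)
  qed (use D W n_def in \<open>auto simp: wronskian_mat_def\<close>)
  moreover have "det D = (\<Prod>i<n. fst (cgs ! i))"
    by (subst det_lower_triangular[OF _ D]) (auto simp: D_def prod_list_diag_prod atLeast0LessThan)
  then have "det D = prod_list (map fst cgs)"
    by (simp add: prod.list_conv_set_nth atLeast0LessThan n_def)
  ultimately show ?thesis
    unfolding wronskian_eq_det using det_mult[OF W D] n_def by simp
qed

text \<open>Laplace expansion along a column that is constantly \<open>1\<close>: its only nonzero entry is in the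
  first row, whose removal shifts all remaining rows by one derivative.\<close>

lemma wronskian_const_column:
  assumes one: "\<And>y. 0 < y \<Longrightarrow> f0 y = 1" and x: "0 < x"
  shows "wronskian (As @ f0 # Bs) x = (-1) ^ length As * wronskian (map deriv (As @ Bs)) x"
proof -
  define fs where "fs = As @ f0 # Bs"
  define n where "n = length fs"
  define k where "k = length As"
  define A where "A = wronskian_mat fs x"
  have A: "A \<in> carrier_mat n n" using wronskian_mat_carrier A_def n_def by auto
  have k: "k < n" by (simp add: k_def n_def fs_def)
  have col: "A $$ (i, k) = (if i = 0 then 1 else 0)" if "i < n" for i
  proof -
    have "A $$ (i, k) = (deriv ^^ i) f0 x"
      using that k by (simp add: A_def wronskian_mat_def n_def fs_def k_def)
    also have "\<dots> = (deriv ^^ i) (\<lambda>_. 1) x" by (rule higher_deriv_cong_pos) (use one x in auto)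
    finally show ?thesis by (simp add: higher_deriv_const)
  qed
  have "det A = (\<Sum>i<n. A $$ (i, k) * cofactor A i k)"
    by (rule laplace_expansion_column[OF A k])
  also have "\<dots> = cofactor A 0 k"
    using k col by (simp add: if_distrib[of "\<lambda>a. a * _"] cong: if_cong)
  also have "\<dots> = (-1) ^ k * det (mat_delete A 0 k)" by (simp add: cofactor_def)
  also have "mat_delete A 0 k = wronskian_mat (map deriv (As @ Bs)) x"
  proof (rule eq_matI)
    fix i j
    assume "i < dim_row (wronskian_mat (map deriv (As @ Bs)) x)"
      and "j < dim_col (wronskian_mat (map deriv (As @ Bs)) x)"
    then have i: "i < n - 1" and j: "j < n - 1" by (auto simp: wronskian_mat_def n_def fs_def)
    have "mat_delete A 0 k $$ (i, j) = (deriv ^^ Suc i) (fs ! (if j < k then j else Suc j)) x"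
      using i j A by (auto simp: mat_delete_def A_def wronskian_mat_def n_def)
    also have "fs ! (if j < k then j else Suc j) = (As @ Bs) ! j"
      using j by (auto simp: fs_def k_def nth_append n_def)
    finally show "mat_delete A 0 k $$ (i, j) = wronskian_mat (map deriv (As @ Bs)) x $$ (i, j)"
      using i j
      by (simp add: wronskian_mat_def higher_deriv_Suc_inner n_def fs_def del: funpow.simps map_append)
  qed (use A in \<open>auto simp: wronskian_mat_def n_def fs_def\<close>)
  finally show ?thesis by (simp add: wronskian_eq_det A_def fs_def k_def)
qed

definition quotient_derivative ::
    "(real \<Rightarrow> real) \<Rightarrow> (real \<Rightarrow> real) \<Rightarrow> real \<Rightarrow> (real \<Rightarrow> real) \<Rightarrow> (real \<Rightarrow> real) \<Rightarrow> bool" where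
  "quotient_derivative \<phi> f c \<psi> g \<longleftrightarrow>
     smooth_on_pos (\<lambda>y. f y / \<phi> y) \<and>
     (\<forall>y>0. \<phi> y \<noteq> 0 \<and> deriv (\<lambda>y. f y / \<phi> y) y = c * (\<psi> y * g y))"

lemma wronskian_reduction:
  assumes \<phi>: "smooth_on_pos \<phi>" and \<psi>: "smooth_on_pos \<psi>" and x: "0 < x"
    and f0: "\<And>y. 0 < y \<Longrightarrow> f0 y = \<phi> y"
    and rel: "list_all2 (\<lambda>f (c, g). quotient_derivative \<phi> f c \<psi> g) (As @ Bs) cgs"
    and g: "\<And>cg. cg \<in> set cgs \<Longrightarrow> smooth_on_pos (snd cg)"
  shows "wronskian (As @ f0 # Bs) x =
    (-1) ^ length As * \<phi> x ^ Suc (length cgs) * \<psi> x ^ length cgs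
      * prod_list (map fst cgs) * wronskian (map snd cgs) x"
proof -
  define quot where "quot = (\<lambda>(f :: real \<Rightarrow> real) y. f y / \<phi> y)"
  have len: "length As + length Bs = length cgs" using list_all2_lengthD[OF rel] by simp
  have rel_nth: "quotient_derivative \<phi> ((As @ Bs) ! j) (fst (cgs ! j)) \<psi> (snd (cgs ! j))"
    if "j < length cgs" for j
    using rel that by (auto simp: list_all2_conv_all_nth case_prod_beta)
  have quot: "smooth_on_pos (quot f) \<and> (\<forall>y>0. \<phi> y * quot f y = f y)" if f: "f \<in> set (As @ Bs)" for f
  proof -
    obtain j where "j < length cgs" and "f = (As @ Bs) ! j"
      using f[unfolded in_set_conv_nth] len by auto
    then show ?thesis using rel_nth by (auto simp: quotient_derivative_def quot_def)
  qed
  have "list_all2 (\<lambda>f g. \<forall>y>0. f y = g y) (As @ f0 # Bs)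
          (map (\<lambda>q y. \<phi> y * q y) (map quot As @ (\<lambda>_. 1) # map quot Bs))"
    using quot f0 by (auto simp: list.rel_map list_all2_same intro!: list_all2_appendI)
  then have "wronskian (As @ f0 # Bs) x =
        wronskian (map (\<lambda>q y. \<phi> y * q y) (map quot As @ (\<lambda>_. 1) # map quot Bs)) x"
    using x by (rule wronskian_cong_pos)
  also have "\<dots> = \<phi> x ^ Suc (length cgs) * wronskian (map quot As @ (\<lambda>_. 1) # map quot Bs) x"
    using quot len by (subst wronskian_mult_common[OF \<phi> _ x]) (auto intro: smooth_on_pos_const)
  also have "wronskian (map quot As @ (\<lambda>_. 1) # map quot Bs) x =
             (-1) ^ length As * wronskian (map deriv (map quot (As @ Bs))) x"
    by (subst wronskian_const_column) (simp_all add: x)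
  also have "map deriv (map quot (As @ Bs)) = map (\<lambda>j. deriv (quot ((As @ Bs) ! j))) [0..<length cgs]"
    by (rule nth_equalityI) (simp_all add: len del: map_append)
  also have "wronskian \<dots> x = wronskian (map (\<lambda>cg y. fst cg * (\<psi> y * snd cg y)) cgs) x"
    using rel_nth len x
    by (intro wronskian_cong_pos)
       (auto simp: list_all2_conv_all_nth quotient_derivative_def quot_def case_prod_beta)
  also have "\<dots> = prod_list (map fst cgs) * wronskian (map (\<lambda>g y. \<psi> y * g y) (map snd cgs)) x"
  proof -
    have "smooth_on_pos (snd cg)" if "cg \<in> set (map (\<lambda>cg. (fst cg, \<lambda>y. \<psi> y * snd cg y)) cgs)" for cg
      using that g by (auto intro!: smooth_on_pos_mult \<psi>)
    from wronskian_scale_columns[of "map (\<lambda>cg. (fst cg, \<lambda>y. \<psi> y * snd cg y)) cgs", OF this x]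
    show ?thesis by (simp add: comp_def)
  qed
  also have "wronskian (map (\<lambda>g y. \<psi> y * g y) (map snd cgs)) x =
      \<psi> x ^ length cgs * wronskian (map snd cgs) x"
    using g by (subst wronskian_mult_common[OF \<psi> _ x]) auto
  finally show ?thesis by (simp add: mult_ac)
qed

section \<open>Laguerre polynomials and Kummer's function\<close>

lemma fps_conv_radius_add_infinite:
  "fps_conv_radius f = \<infinity> \<Longrightarrow> fps_conv_radius g = \<infinity> \<Longrightarrow> fps_conv_radius (f + g) = \<infinity>"
  using fps_conv_radius_add[of f g] by simp

lemma fps_conv_radius_diff_infinite:
  "fps_conv_radius f = \<infinity> \<Longrightarrow> fps_conv_radius g = \<infinity> \<Longrightarrow> fps_conv_radius (f - g) = \<infinity>"
  using fps_conv_radius_diff[of f g] by simp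

lemma fps_conv_radius_mult_infinite:
  "fps_conv_radius f = \<infinity> \<Longrightarrow> fps_conv_radius g = \<infinity> \<Longrightarrow> fps_conv_radius (f * g) = \<infinity>"
  using fps_conv_radius_mult[of f g] by simp

lemma fps_conv_radius_deriv_infinite:
  fixes f :: "real fps"
  shows "fps_conv_radius f = \<infinity> \<Longrightarrow> fps_conv_radius (fps_deriv f) = \<infinity>"
  using fps_conv_radius_deriv[of f] by simp

lemmas fps_conv_radius_infinite_intros =
  fps_conv_radius_add_infinite fps_conv_radius_diff_infinite fps_conv_radius_mult_infinite
  fps_conv_radius_deriv_infinite

lemma has_real_derivative_eval_fps_infinite:
  fixes f :: "real fps"
  assumes "fps_conv_radius f = \<infinity>"
  shows "(eval_fps f has_real_derivative eval_fps (fps_deriv f) y) (at y)"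
  using assms by (intro has_field_derivative_eval_fps) simp

definition laguerre_fps :: "nat \<Rightarrow> real \<Rightarrow> real fps" where
  "laguerre_fps n b =
     Abs_fps (\<lambda>k. if k \<le> n then (-1) ^ k * ((real n + b) gchoose (n - k)) / fact k else 0)"

lemma laguerre_fps_nth:
  "fps_nth (laguerre_fps n b) k =
     (if k \<le> n then (-1) ^ k * ((real n + b) gchoose (n - k)) / fact k else 0)"
  by (simp add: laguerre_fps_def)

lemma fps_conv_radius_laguerre_fps [simp]: "fps_conv_radius (laguerre_fps n b) = \<infinity>"
  unfolding fps_conv_radius_def
  by (rule conv_radius_inftyI'', rule summable_finite[of "{..n}"]) (auto simp: laguerre_fps_nth)

lemma laguerre_eq_eval_fps: "laguerre n b = eval_fps (laguerre_fps n b)"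
proof
  fix y
  have "eval_fps (laguerre_fps n b) y = (\<Sum>k\<le>n. fps_nth (laguerre_fps n b) k * y ^ k)"
    unfolding eval_fps_def by (rule suminf_finite) (auto simp: laguerre_fps_nth)
  also have "\<dots> = laguerre n b y"
    unfolding laguerre_def
    by (intro sum.cong refl) (simp add: laguerre_fps_nth gbinomial_pochhammer' of_nat_diff)
  finally show "laguerre n b y = eval_fps (laguerre_fps n b) y" ..
qed

lemma laguerre_fps_0: "laguerre_fps 0 b = 1"
  by (rule fps_ext) (simp add: laguerre_fps_nth)

lemma fps_nth_X_mult_deriv: "fps_nth (fps_X * fps_deriv f) k = of_nat k * fps_nth f k"
  by (cases k) simp_all

lemma fps_nth_deriv_laguerre_fps:
  "fps_nth (fps_deriv (laguerre_fps n b)) k =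
     (if k < n then - ((-1) ^ k * ((real n + b) gchoose (n - Suc k)) / fact k) else 0)"
proof -
  have "of_nat (Suc k) * ((-1) ^ Suc k * x / fact (Suc k)) = - ((-1) ^ k * x / fact k)" for x :: real
    by (simp add: fact_Suc field_simps del: of_nat_Suc)
  then show ?thesis by (simp add: laguerre_fps_nth)
qed

lemma fps_deriv_laguerre_fps_Suc: "fps_deriv (laguerre_fps (Suc n) b) = - laguerre_fps n (b + 1)"
proof (rule fps_ext)
  fix k
  have "(real (Suc n) + b) gchoose (n - k) = (real n + (b + 1)) gchoose (n - k)"
    by (simp add: add_ac)
  then show "fps_nth (fps_deriv (laguerre_fps (Suc n) b)) k = fps_nth (- laguerre_fps n (b + 1)) k"
    by (simp add: fps_nth_deriv_laguerre_fps laguerre_fps_nth del: of_nat_Suc fps_deriv_nth)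
qed

lemma laguerre_fps_raise_parameter:
  "laguerre_fps n (b + 1) = laguerre_fps n b - fps_deriv (laguerre_fps n b)"
proof (rule fps_ext)
  fix k
  show "fps_nth (laguerre_fps n (b + 1)) k =
        fps_nth (laguerre_fps n b - fps_deriv (laguerre_fps n b)) k"
  proof (cases "k < n")
    case True
    then have "n - k = Suc (n - Suc k)" by simp
    then have "(real n + (b + 1)) gchoose (n - k) =
               ((real n + b) gchoose (n - Suc k)) + ((real n + b) gchoose (n - k))"
      using gbinomial_Suc_Suc[of "real n + b" "n - Suc k"] by (simp add: add_ac)
    then show ?thesis
      using True
      by (simp add: laguerre_fps_nth fps_nth_deriv_laguerre_fps field_simps del: fps_deriv_nth)
  qed (auto simp: laguerre_fps_nth fps_nth_deriv_laguerre_fps simp del: fps_deriv_nth)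
qed

lemma laguerre_fps_lower_parameter:
  "fps_const b * laguerre_fps n b + fps_X * fps_deriv (laguerre_fps n b) =
   fps_const (real n + b) * laguerre_fps n (b - 1)"
proof (rule fps_ext)
  fix k
  have "fps_nth (fps_const b * laguerre_fps n b + fps_X * fps_deriv (laguerre_fps n b)) k =
        (b + real k) * fps_nth (laguerre_fps n b) k"
    by (simp add: fps_nth_X_mult_deriv algebra_simps del: fps_X_mult_nth)
  also have "\<dots> = (real n + b) * fps_nth (laguerre_fps n (b - 1)) k"
  proof (cases "k \<le> n")
    case True
    have "(b + real k) * ((real n + b) gchoose (n - k)) =
          (real n + b) * ((real n + (b - 1)) gchoose (n - k))"
      using gbinomial_absorb_comp[of "real n + b" "n - k"] True by (simp add: of_nat_diff algebra_simps)
    then show ?thesis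
      using True by (simp add: laguerre_fps_nth)
  qed (simp add: laguerre_fps_nth)
  finally show "fps_nth (fps_const b * laguerre_fps n b + fps_X * fps_deriv (laguerre_fps n b)) k =
        fps_nth (fps_const (real n + b) * laguerre_fps n (b - 1)) k"
    by simp
qed

lemma laguerre_eq_eval_fps_at: "laguerre n b y = eval_fps (laguerre_fps n b) y"
  by (simp add: laguerre_eq_eval_fps)

lemma deriv_laguerre_eq_eval_fps: "deriv (laguerre n b) y = eval_fps (fps_deriv (laguerre_fps n b)) y"
  unfolding laguerre_eq_eval_fps by (intro DERIV_imp_deriv has_real_derivative_eval_fps_infinite) simp

lemma laguerre_has_derivative: "(laguerre n b has_real_derivative deriv (laguerre n b) y) (at y)"
  unfolding deriv_laguerre_eq_eval_fps unfolding laguerre_eq_eval_fps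
  by (intro has_real_derivative_eval_fps_infinite) simp

lemma laguerre_0: "laguerre 0 b y = 1"
  by (simp add: laguerre_eq_eval_fps_at laguerre_fps_0)

lemma deriv_laguerre_Suc: "deriv (laguerre (Suc n) b) y = - laguerre n (b + 1) y"
  by (simp add: deriv_laguerre_eq_eval_fps fps_deriv_laguerre_fps_Suc laguerre_eq_eval_fps_at
                eval_fps_minus)

lemma laguerre_raise_parameter: "laguerre n (b + 1) y = laguerre n b y - deriv (laguerre n b) y"
  using arg_cong[OF laguerre_fps_raise_parameter, of "\<lambda>f. eval_fps f y"]
  by (simp add: deriv_laguerre_eq_eval_fps laguerre_eq_eval_fps_at eval_fps_diff
                fps_conv_radius_infinite_intros)

lemma laguerre_lower_parameter:
  "b * laguerre n b y + y * deriv (laguerre n b) y = (real n + b) * laguerre n (b - 1) y"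
  using arg_cong[OF laguerre_fps_lower_parameter, of "\<lambda>f. eval_fps f y"]
  by (simp add: deriv_laguerre_eq_eval_fps laguerre_eq_eval_fps_at eval_fps_add eval_fps_mult
                fps_conv_radius_infinite_intros)

lemma laguerre_raise_degree:
  "(b - y) * laguerre n b y + y * deriv (laguerre n b) y = (real n + 1) * laguerre (Suc n) (b - 1) y"
proof -
  have "laguerre (Suc n) b y = laguerre (Suc n) (b - 1) y + laguerre n b y"
    using laguerre_raise_parameter[of "Suc n" "b - 1" y] by (simp add: deriv_laguerre_Suc)
  moreover have "b * laguerre (Suc n) b y - y * laguerre n (b + 1) y =
      (real n + 1 + b) * laguerre (Suc n) (b - 1) y"
    using laguerre_lower_parameter[of b "Suc n" y] by (simp add: deriv_laguerre_Suc)
  moreover have "y * laguerre n (b + 1) y = y * laguerre n b y - y * deriv (laguerre n b) y"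
    by (simp add: laguerre_raise_parameter right_diff_distrib)
  ultimately show ?thesis by (simp add: algebra_simps)
qed

definition kummer_fps :: "real \<Rightarrow> real \<Rightarrow> real fps" where
  "kummer_fps a b = Abs_fps (\<lambda>k. pochhammer a k / pochhammer b k / fact k)"

lemma kummer_fps_nth: "fps_nth (kummer_fps a b) k = pochhammer a k / pochhammer b k / fact k"
  by (simp add: kummer_fps_def)

lemma fps_conv_radius_kummer_fps [simp]: "fps_conv_radius (kummer_fps a b) = \<infinity>"
  unfolding fps_conv_radius_def
proof (rule conv_radius_inftyI'')
  fix y :: real
  define r where "r k = \<bar>a + real k\<bar> * \<bar>y\<bar> / (\<bar>b + real k\<bar> * (real k + 1))" for k
  have "r \<longlonglongrightarrow> 0" unfolding r_def by real_asymp
  then obtain N where N: "\<And>k. k \<ge> N \<Longrightarrow> r k < 1/2"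
    using order_tendstoD(2)[of r 0 sequentially "1/2"] by (auto simp: eventually_sequentially)
  show "summable (\<lambda>k. fps_nth (kummer_fps a b) k * y ^ k)"
  proof (rule summable_ratio_test[of "1/2" N])
    fix k
    assume "k \<ge> N"
    have "fps_nth (kummer_fps a b) (Suc k) =
          fps_nth (kummer_fps a b) k * ((a + real k) / ((b + real k) * (real k + 1)))"
      by (simp add: kummer_fps_nth pochhammer_rec' fact_Suc divide_inverse inverse_mult_distrib
                    ac_simps)
    then have "norm (fps_nth (kummer_fps a b) (Suc k) * y ^ Suc k) =
               norm (fps_nth (kummer_fps a b) k * y ^ k) * r k"
      by (simp add: r_def abs_mult abs_divide)
    also have "\<dots> \<le> norm (fps_nth (kummer_fps a b) k * y ^ k) * (1/2)"
      using N[OF \<open>k \<ge> N\<close>] by (intro mult_left_mono) auto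
    finally show "norm (fps_nth (kummer_fps a b) (Suc k) * y ^ Suc k) \<le>
                  1/2 * norm (fps_nth (kummer_fps a b) k * y ^ k)"
      by simp
  qed simp
qed

lemma kummerM_eq_eval_fps: "kummerM a b = eval_fps (kummer_fps a b)"
  by (simp add: fun_eq_iff kummerM_def eval_fps_def kummer_fps_nth)

lemma fps_deriv_kummer_fps:
  "fps_deriv (kummer_fps a b) = fps_const (a / b) * kummer_fps (a + 1) (b + 1)"
proof (rule fps_ext)
  fix k
  have "of_nat (Suc k) * (a * P / (b * Q) / (of_nat (Suc k) * F)) = a / b * (P / Q / F)"
    for P Q F :: real
    by (simp add: field_simps del: of_nat_Suc)
  then show "fps_nth (fps_deriv (kummer_fps a b)) k =
             fps_nth (fps_const (a / b) * kummer_fps (a + 1) (b + 1)) k"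
    by (simp add: kummer_fps_nth pochhammer_rec fact_Suc del: of_nat_Suc)
qed

lemma deriv_kummerM_eq_eval_fps: "deriv (kummerM a b) y = eval_fps (fps_deriv (kummer_fps a b)) y"
  unfolding kummerM_eq_eval_fps by (intro DERIV_imp_deriv has_real_derivative_eval_fps_infinite) simp

lemma kummerM_has_derivative: "(kummerM a b has_real_derivative deriv (kummerM a b) y) (at y)"
  unfolding deriv_kummerM_eq_eval_fps unfolding kummerM_eq_eval_fps
  by (intro has_real_derivative_eval_fps_infinite) simp

lemma pochhammer_not_Ints_nonzero: "(b::real) \<notin> \<int> \<Longrightarrow> pochhammer b k \<noteq> 0"
  by (auto simp: pochhammer_eq_0_iff)

lemma add_of_nat_not_Ints_nonzero: "(b::real) \<notin> \<int> \<Longrightarrow> b + of_nat k \<noteq> 0"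
  by (metis Ints_minus Ints_of_nat add_eq_0_iff2)

lemma not_Ints_diff_1: "(b::real) \<notin> \<int> \<Longrightarrow> b - 1 \<notin> \<int>"
  by (metis Ints_1 Ints_add diff_add_cancel)

lemma not_Ints_add_1: "(b::real) \<notin> \<int> \<Longrightarrow> b + 1 \<notin> \<int>"
  by (metis Ints_1 Ints_diff add_diff_cancel)

lemma not_Ints_one_minus:
  assumes "(\<alpha>::real) \<notin> \<int>"
  shows "1 - \<alpha> \<notin> \<int>"
proof
  assume "1 - \<alpha> \<in> \<int>"
  then have "1 - (1 - \<alpha>) \<in> \<int>" by (intro Ints_diff) simp_all
  with assms show False by simp
qed

lemma kummer_fps_nth_Suc:
  "fps_nth (kummer_fps a b) (Suc k) =
     fps_nth (kummer_fps a b) k * (a + real k) / ((b + real k) * (1 + real k))"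
  by (simp add: kummer_fps_nth pochhammer_rec' fact_Suc ac_simps)

lemma kummer_fps_nth_plus_1:
  assumes "b \<notin> \<int>"
  shows "fps_nth (kummer_fps a (b + 1)) k = fps_nth (kummer_fps a b) k * b / (b + real k)"
proof -
  have "b * pochhammer (b + 1) k = (b + real k) * pochhammer b k"
    using pochhammer_rec[of b k] pochhammer_rec'[of b k] by simp
  then show ?thesis
    using pochhammer_not_Ints_nonzero[OF assms] pochhammer_not_Ints_nonzero[OF not_Ints_add_1[OF assms]]
      add_of_nat_not_Ints_nonzero[OF assms]
    by (simp add: kummer_fps_nth divide_simps)
qed

lemma kummer_fps_lower_b:
  assumes "b \<notin> \<int>"
  shows "fps_const (b - 1) * kummer_fps a b + fps_X * fps_deriv (kummer_fps a b) =
         fps_const (b - 1) * kummer_fps a (b - 1)"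
proof (rule fps_ext)
  fix k
  have b1: "b - 1 \<notin> \<int>" using assms by (rule not_Ints_diff_1)
  then have "b - 1 \<noteq> 0" "b - 1 + real k \<noteq> 0" using add_of_nat_not_Ints_nonzero by auto
  then show "fps_nth (fps_const (b - 1) * kummer_fps a b + fps_X * fps_deriv (kummer_fps a b)) k =
             fps_nth (fps_const (b - 1) * kummer_fps a (b - 1)) k"
    using kummer_fps_nth_plus_1[OF b1, of a k]
    by (simp add: fps_nth_X_mult_deriv divide_simps del: fps_X_mult_nth) (simp add: algebra_simps)
qed

lemma kummer_fps_raise_b:
  assumes "b \<notin> \<int>"
  shows "fps_deriv (kummer_fps a b) - kummer_fps a b = fps_const ((a - b) / b) * kummer_fps a (b + 1)"
proof (rule fps_ext)
  fix k
  have "b \<noteq> 0" "b + real k \<noteq> 0" using assms add_of_nat_not_Ints_nonzero[OF assms] by auto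
  then show "fps_nth (fps_deriv (kummer_fps a b) - kummer_fps a b) k =
             fps_nth (fps_const ((a - b) / b) * kummer_fps a (b + 1)) k"
    by (simp add: kummer_fps_nth_Suc kummer_fps_nth_plus_1[OF assms] divide_simps del: of_nat_Suc)
       (simp add: algebra_simps)
qed

lemma kummer_fps_lower_ab:
  assumes "b \<notin> \<int>"
  shows "fps_const (b - 1) * kummer_fps a b - fps_X * kummer_fps a b
           + fps_X * fps_deriv (kummer_fps a b) =
         fps_const (b - 1) * kummer_fps (a - 1) (b - 1)"
proof (rule fps_ext)
  fix k
  show "fps_nth (fps_const (b - 1) * kummer_fps a b - fps_X * kummer_fps a b
                 + fps_X * fps_deriv (kummer_fps a b)) k =
        fps_nth (fps_const (b - 1) * kummer_fps (a - 1) (b - 1)) k"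
  proof (cases k)
    case (Suc j)
    have "b - 1 \<noteq> 0" "b + real j \<noteq> 0"
      using assms add_of_nat_not_Ints_nonzero[OF assms, of j] by auto
    moreover have c: "fps_nth (kummer_fps (a - 1) (b - 1)) (Suc j) =
                   fps_nth (kummer_fps a b) j * (a - 1) / ((b - 1) * (1 + real j))"
      by (simp add: kummer_fps_nth pochhammer_rec fact_Suc ac_simps)
    ultimately show ?thesis
      by (simp add: Suc c kummer_fps_nth_Suc[of a b j] divide_simps del: of_nat_Suc)
         (simp add: algebra_simps)
  qed (simp add: kummer_fps_nth)
qed

lemma kummerM_eq_eval_fps_at: "kummerM a b y = eval_fps (kummer_fps a b) y"
  by (simp add: kummerM_eq_eval_fps)

lemma deriv_kummerM_shift: "deriv (kummerM a b) y = a / b * kummerM (a + 1) (b + 1) y"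
  by (simp add: deriv_kummerM_eq_eval_fps fps_deriv_kummer_fps kummerM_eq_eval_fps_at eval_fps_mult)

lemma kummerM_lower_b:
  assumes "b \<notin> \<int>"
  shows "(b - 1) * kummerM a b y + y * deriv (kummerM a b) y = (b - 1) * kummerM a (b - 1) y"
  using arg_cong[OF kummer_fps_lower_b[OF assms], of "\<lambda>f. eval_fps f y"]
  by (simp add: deriv_kummerM_eq_eval_fps kummerM_eq_eval_fps_at eval_fps_add eval_fps_mult
                fps_conv_radius_infinite_intros)

lemma kummerM_raise_b:
  assumes "b \<notin> \<int>"
  shows "deriv (kummerM a b) y - kummerM a b y = (a - b) / b * kummerM a (b + 1) y"
  using arg_cong[OF kummer_fps_raise_b[OF assms], of "\<lambda>f. eval_fps f y"]
  by (simp add: deriv_kummerM_eq_eval_fps kummerM_eq_eval_fps_at eval_fps_diff eval_fps_mult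
                fps_conv_radius_infinite_intros)

lemma kummerM_lower_ab:
  assumes "b \<notin> \<int>"
  shows "(b - 1 - y) * kummerM a b y + y * deriv (kummerM a b) y = (b - 1) * kummerM (a - 1) (b - 1) y"
  using arg_cong[OF kummer_fps_lower_ab[OF assms], of "\<lambda>f. eval_fps f y"]
  by (simp add: deriv_kummerM_eq_eval_fps kummerM_eq_eval_fps_at eval_fps_add eval_fps_diff eval_fps_mult
                fps_conv_radius_infinite_intros algebra_simps)

section \<open>Weighted seed functions\<close>

lemma smooth_on_pos_powr: "smooth_on_pos (\<lambda>y. y powr e)"
proof (rule smooth_on_posI_closed_class[where P = "\<lambda>f. \<exists>c e. \<forall>y>0. f y = c * y powr e"])
  fix f :: "real \<Rightarrow> real"
  assume "\<exists>c e. \<forall>y>0. f y = c * y powr e"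
  then obtain c e where f: "\<And>y. 0 < y \<Longrightarrow> f y = c * y powr e" by blast
  have "(f has_real_derivative (c * e) * x powr (e - 1)) (at x)" if x: "0 < x" for x
  proof (rule has_real_derivative_transform_pos[of "\<lambda>y. c * y powr e"])
    show "((\<lambda>y. c * y powr e) has_real_derivative (c * e) * x powr (e - 1)) (at x)"
      using DERIV_cmult[OF has_real_derivative_powr[OF x], of c e] by (simp add: mult.assoc)
  qed (use f x in auto)
  then show "\<exists>f'. (\<exists>c e. \<forall>y>0. f' y = c * y powr e) \<and> (\<forall>x>0. (f has_real_derivative f' x) (at x))"
    by (intro exI[of _ "\<lambda>y. (c * e) * y powr (e - 1)"] conjI exI[of _ "c * e"] exI[of _ "e - 1"]) auto
next
  show "\<exists>c e'. \<forall>y>0. y powr e = c * y powr e'"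
    by (intro exI[of _ 1] exI[of _ e]) simp
qed

lemma smooth_on_pos_eval_fps_scaled:
  fixes f :: "real fps"
  assumes "fps_conv_radius f = \<infinity>"
  shows "smooth_on_pos (\<lambda>y. eval_fps f (\<sigma> * y))"
proof (rule smooth_on_posI_closed_class
    [where P = "\<lambda>h. \<exists>g. fps_conv_radius g = \<infinity> \<and> h = (\<lambda>y. eval_fps g (\<sigma> * y))"])
  fix h
  assume "\<exists>g. fps_conv_radius g = \<infinity> \<and> h = (\<lambda>y. eval_fps g (\<sigma> * y))"
  then obtain g where g: "fps_conv_radius g = \<infinity>" and h: "h = (\<lambda>y. eval_fps g (\<sigma> * y))" by blast
  have "(h has_real_derivative eval_fps (fps_const \<sigma> * fps_deriv g) (\<sigma> * x)) (at x)" for x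
  proof -
    have "(h has_real_derivative eval_fps (fps_deriv g) (\<sigma> * x) * \<sigma>) (at x)"
      unfolding h by (rule DERIV_chain2[OF has_real_derivative_eval_fps_infinite[OF g]])
                     (auto intro!: derivative_eq_intros)
    moreover have "eval_fps (fps_const \<sigma> * fps_deriv g) (\<sigma> * x) = eval_fps (fps_deriv g) (\<sigma> * x) * \<sigma>"
      using fps_conv_radius_deriv_infinite[OF g] by (subst eval_fps_mult) (simp_all add: mult.commute)
    ultimately show ?thesis by simp
  qed
  moreover have "fps_conv_radius (fps_const \<sigma> * fps_deriv g) = \<infinity>"
    using g by (simp add: fps_conv_radius_infinite_intros)
  ultimately show "\<exists>h'. (\<exists>g. fps_conv_radius g = \<infinity> \<and> h' = (\<lambda>y. eval_fps g (\<sigma> * y))) \<and>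
                        (\<forall>x>0. (h has_real_derivative h' x) (at x))"
    by blast
qed (use assms in blast)

lemma smooth_on_pos_exp_scaled: "smooth_on_pos (\<lambda>y. exp (d * y))"
  using smooth_on_pos_eval_fps_scaled[of "fps_exp 1" d] by simp

lemma smooth_on_pos_exp: "smooth_on_pos exp"
  using smooth_on_pos_exp_scaled[of 1] by simp

lemma smooth_on_pos_laguerre_scaled: "smooth_on_pos (\<lambda>y. laguerre n b (\<sigma> * y))"
  using smooth_on_pos_eval_fps_scaled[of "laguerre_fps n b" \<sigma>] by (simp add: laguerre_eq_eval_fps)

lemma smooth_on_pos_kummerM_scaled: "smooth_on_pos (\<lambda>y. kummerM a b (\<sigma> * y))"
  using smooth_on_pos_eval_fps_scaled[of "kummer_fps a b" \<sigma>] by (simp add: kummerM_eq_eval_fps)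

lemma smooth_on_pos_laguerre: "smooth_on_pos (laguerre n b)"
  using smooth_on_pos_laguerre_scaled[of n b 1] by simp

lemma smooth_on_pos_laguerre_uminus: "smooth_on_pos (\<lambda>y. laguerre n b (- y))"
  using smooth_on_pos_laguerre_scaled[of n b "-1"] by simp

lemma smooth_on_pos_htilde: "smooth_on_pos (htilde b lam)"
  unfolding htilde_def
  using smooth_on_pos_mult[OF smooth_on_pos_powr smooth_on_pos_kummerM_scaled[of _ _ 1]] by simp

lemma smooth_on_pos_seed_functions: "f \<in> set (seed_functions M1 M2 b) \<Longrightarrow> smooth_on_pos f"
  unfolding seed_functions_def
  by (auto intro!: smooth_on_pos_mult smooth_on_pos_exp smooth_on_pos_powr smooth_on_pos_laguerre
                   smooth_on_pos_laguerre_uminus)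

definition weight :: "real \<Rightarrow> real \<Rightarrow> real \<Rightarrow> real" where
  "weight d e y = exp (d * y) * y powr e"

lemma weight_nonzero: "0 < y \<Longrightarrow> weight d e y \<noteq> 0"
  by (simp add: weight_def)

lemma weight_mult: "0 < y \<Longrightarrow> weight d e y * weight d' e' y = weight (d + d') (e + e') y"
  by (simp add: weight_def exp_add powr_add distrib_right)

lemma weight_power: "0 < y \<Longrightarrow> weight d e y ^ n = weight (real n * d) (real n * e) y"
  by (induction n) (simp_all add: weight_mult, simp_all add: weight_def algebra_simps)

lemma smooth_on_pos_weight: "smooth_on_pos (weight d e)"
  unfolding weight_def[abs_def]
  by (intro smooth_on_pos_mult smooth_on_pos_exp_scaled smooth_on_pos_powr)

lemma weight_has_derivative:
  "0 < y \<Longrightarrow> (weight d e has_real_derivative weight d (e - 1) y * (d * y + e)) (at y)"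
  unfolding weight_def[abs_def]
  by (auto intro!: derivative_eq_intros simp: powr_diff field_simps)

text \<open>The hypothesis \<open>K\<close> is where a contiguous relation of the special function \<open>P\<close> enters.\<close>

lemma quotient_derivative_weighted:
  assumes P: "\<And>z. (P has_real_derivative P' z) (at z)"
    and smooth_P: "smooth_on_pos (\<lambda>y. P (\<sigma> * y))"
    and f: "\<And>y. 0 < y \<Longrightarrow> f y = weight (d0 + d) (e0 + e) y * P (\<sigma> * y)"
    and K: "\<And>y. 0 < y \<Longrightarrow> (d * y + e) * P (\<sigma> * y) + \<sigma> * y * P' (\<sigma> * y) = c * Q y"
    and g: "\<And>y. 0 < y \<Longrightarrow> weight d (e - 1) y * Q y = weight d1 e1 y * g y"
  shows "quotient_derivative (weight d0 e0) f c (weight d1 e1) g"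
proof -
  have quot: "f y / weight d0 e0 y = weight d e y * P (\<sigma> * y)" if "0 < y" for y
    using that by (simp add: f weight_nonzero weight_mult[symmetric] field_simps)
  have "deriv (\<lambda>y. f y / weight d0 e0 y) y = c * (weight d1 e1 y * g y)" if y: "0 < y" for y
  proof -
    have "((\<lambda>y. P (\<sigma> * y)) has_real_derivative P' (\<sigma> * y) * \<sigma>) (at y)"
      by (rule DERIV_chain2[OF P]) (auto intro!: derivative_eq_intros)
    from DERIV_mult[OF weight_has_derivative[OF y] this]
    have "((\<lambda>y. weight d e y * P (\<sigma> * y)) has_real_derivative
           weight d (e - 1) y * (d * y + e) * P (\<sigma> * y) + P' (\<sigma> * y) * \<sigma> * weight d e y) (at y)" .
    moreover have "weight d (e - 1) y * (d * y + e) * P (\<sigma> * y) + P' (\<sigma> * y) * \<sigma> * weight d e y =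
          weight d (e - 1) y * ((d * y + e) * P (\<sigma> * y) + \<sigma> * y * P' (\<sigma> * y))"
      using y by (simp add: weight_def powr_diff field_simps)
    moreover have "\<dots> = c * (weight d1 e1 y * g y)"
      unfolding K[OF y] g[OF y, symmetric] by (simp add: ac_simps)
    ultimately have "((\<lambda>y. weight d e y * P (\<sigma> * y)) has_real_derivative
                       c * (weight d1 e1 y * g y)) (at y)"
      by simp
    then have "((\<lambda>y. f y / weight d0 e0 y) has_real_derivative c * (weight d1 e1 y * g y)) (at y)"
      by (rule has_real_derivative_transform_pos) (use quot y in auto)
    then show ?thesis by (rule DERIV_imp_deriv)
  qed
  moreover have "smooth_on_pos (\<lambda>y. f y / weight d0 e0 y)"
    using quot
    by (intro smooth_on_pos_cong[OF _ smooth_on_pos_mult[OF smooth_on_pos_weight smooth_P]]) auto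
  ultimately show ?thesis
    by (simp add: quotient_derivative_def weight_nonzero)
qed

lemmas quotient_derivative_laguerre =
  quotient_derivative_weighted[where P = "laguerre n b" and P' = "deriv (laguerre n b)" for n b,
    OF laguerre_has_derivative smooth_on_pos_laguerre_scaled]

lemmas quotient_derivative_kummerM =
  quotient_derivative_weighted[where P = "kummerM a b" and P' = "deriv (kummerM a b)" for a b,
    OF kummerM_has_derivative smooth_on_pos_kummerM_scaled]

section \<open>Maya diagrams\<close>

lemma maya_finite_pos:
  assumes "maya M"
  shows "finite {n::nat. int n \<in> M}"
proof -
  have "{n::nat. int n \<in> M} = int -` {k \<in> M. k \<ge> 0}" by auto
  then show ?thesis
    using assms by (simp only:) (rule finite_vimageI, auto simp: maya_def inj_on_def)
qed

lemma maya_finite_neg: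
  assumes "maya M"
  shows "finite {n::nat. - int n - 1 \<notin> M}"
proof -
  have "{n::nat. - int n - 1 \<notin> M} = (\<lambda>n. - int n - 1) -` {k. k < 0 \<and> k \<notin> M}" by auto
  then show ?thesis
    using assms by (simp only:) (rule finite_vimageI, auto simp: maya_def inj_def)
qed

lemma mem_maya_shift: "k \<in> maya_shift M t \<longleftrightarrow> k - t \<in> M"
  unfolding maya_shift_def by (auto simp: image_iff intro: bexI[of _ "k - t"])

lemma sorted_list_of_set_eqI:
  "finite A \<Longrightarrow> sorted_wrt (<) xs \<Longrightarrow> set xs = A \<Longrightarrow> sorted_list_of_set A = xs"
  by (metis sorted_list_of_set.strict_sorted_key_list_of_set
        sorted_list_of_set.set_sorted_key_list_of_set strict_sorted_equal)

lemma rev_sorted_list_of_set_image_Suc: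
  "finite T \<Longrightarrow> rev (sorted_list_of_set (Suc ` T)) = map Suc (rev (sorted_list_of_set T))"
  by (subst sorted_list_of_set_eqI[of _ "map Suc (sorted_list_of_set T)"])
     (auto simp: sorted_wrt_map rev_map)

lemma rev_sorted_list_of_set_insert_0_image_Suc:
  "finite T \<Longrightarrow>
     rev (sorted_list_of_set (insert 0 (Suc ` T))) = map Suc (rev (sorted_list_of_set T)) @ [0]"
  by (subst sorted_list_of_set_eqI[of _ "0 # map Suc (sorted_list_of_set T)"])
     (auto simp: sorted_wrt_map rev_map)

lemma Diff_0_eq_image_Suc:
  fixes S T :: "nat set"
  assumes "\<And>m. Suc m \<in> S \<longleftrightarrow> m \<in> T"
  shows "S - {0} = Suc ` T"
proof (intro Set.set_eqI iffI)
  fix n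
  assume "n \<in> S - {0}"
  then obtain m where "n = Suc m" "Suc m \<in> S" by (cases n) auto
  then show "n \<in> Suc ` T" using assms by auto
qed (use assms in auto)

lemma maya_shift_down:
  assumes M: "maya M" and "0 \<in> M"
  shows "maya_pos M = map Suc (maya_pos (maya_shift M (-1))) @ [0]"
    and "maya_neg (maya_shift M (-1)) = map Suc (maya_neg M)"
proof -
  define T where "T = {n. int n \<in> maya_shift M (-1)}"
  have "{n. int n \<in> M} - {0} = Suc ` T"
    unfolding T_def by (intro Diff_0_eq_image_Suc) (auto simp: mem_maya_shift add.commute)
  then have pos: "{n. int n \<in> M} = insert 0 (Suc ` T)"
    using \<open>0 \<in> M\<close> by auto
  then have "finite T"
    using maya_finite_pos[OF M] by (metis finite_imageD finite_insert inj_Suc)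
  have "maya_pos M = rev (sorted_list_of_set (insert 0 (Suc ` T)))"
    by (simp only: maya_pos_def pos)
  also have "\<dots> = map Suc (rev (sorted_list_of_set T)) @ [0]"
    by (rule rev_sorted_list_of_set_insert_0_image_Suc[OF \<open>finite T\<close>])
  finally show "maya_pos M = map Suc (maya_pos (maya_shift M (-1))) @ [0]"
    by (simp add: maya_pos_def T_def)
  have "{n. - int n - 1 \<notin> maya_shift M (-1)} - {0} = Suc ` {n. - int n - 1 \<notin> M}"
    by (intro Diff_0_eq_image_Suc) (auto simp: mem_maya_shift minus_diff_commute)
  moreover have "0 \<notin> {n. - int n - 1 \<notin> maya_shift M (-1)}"
    using \<open>0 \<in> M\<close> by (simp add: mem_maya_shift)
  ultimately have "{n. - int n - 1 \<notin> maya_shift M (-1)} = Suc ` {n. - int n - 1 \<notin> M}"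
    by auto
  then show "maya_neg (maya_shift M (-1)) = map Suc (maya_neg M)"
    unfolding maya_neg_def by (simp add: rev_sorted_list_of_set_image_Suc maya_finite_neg[OF M])
qed

lemma maya_shift_up:
  assumes M: "maya M" and "-1 \<notin> M"
  shows "maya_neg M = map Suc (maya_neg (maya_shift M 1)) @ [0]"
    and "maya_pos (maya_shift M 1) = map Suc (maya_pos M)"
proof -
  define T where "T = {n. - int n - 1 \<notin> maya_shift M 1}"
  have "{n. - int n - 1 \<notin> M} - {0} = Suc ` T"
    unfolding T_def by (intro Diff_0_eq_image_Suc) (auto simp: mem_maya_shift algebra_simps)
  then have neg: "{n. - int n - 1 \<notin> M} = insert 0 (Suc ` T)"
    using \<open>-1 \<notin> M\<close> by auto
  then have "finite T"
    using maya_finite_neg[OF M] by (metis finite_imageD finite_insert inj_Suc)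
  have "maya_neg M = rev (sorted_list_of_set (insert 0 (Suc ` T)))"
    by (simp only: maya_neg_def neg)
  also have "\<dots> = map Suc (rev (sorted_list_of_set T)) @ [0]"
    by (rule rev_sorted_list_of_set_insert_0_image_Suc[OF \<open>finite T\<close>])
  finally show "maya_neg M = map Suc (maya_neg (maya_shift M 1)) @ [0]"
    by (simp add: maya_neg_def T_def)
  have "{n. int n \<in> maya_shift M 1} - {0} = Suc ` {n. int n \<in> M}"
    by (intro Diff_0_eq_image_Suc) (auto simp: mem_maya_shift)
  moreover have "0 \<notin> {n. int n \<in> maya_shift M 1}"
    using \<open>-1 \<notin> M\<close> by (simp add: mem_maya_shift)
  ultimately have "{n. int n \<in> maya_shift M 1} = Suc ` {n. int n \<in> M}"
    by auto
  then show "maya_pos (maya_shift M 1) = map Suc (maya_pos M)"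
    unfolding maya_pos_def by (simp add: rev_sorted_list_of_set_image_Suc maya_finite_pos[OF M])
qed

lemma zero_mem_if_last_maya_pos:
  assumes "maya M" and "maya_pos M \<noteq> [] \<and> last (maya_pos M) = 0"
  shows "0 \<in> M"
  using last_in_set[of "maya_pos M"] assms maya_finite_pos[OF assms(1)] by (simp add: maya_pos_def)

lemma minus_one_not_mem_if_last_maya_neg:
  assumes "maya M" and "maya_neg M \<noteq> [] \<and> last (maya_neg M) = 0"
  shows "-1 \<notin> M"
  using last_in_set[of "maya_neg M"] assms maya_finite_neg[OF assms(1)] by (simp add: maya_neg_def)

section \<open>Reduction of \<open>\<Omega>\<close>\<close>

definition prefactor_rate :: "int set \<Rightarrow> int set \<Rightarrow> real" where
  "prefactor_rate M1 M2 = - real (length (maya_pos M2) + length (maya_neg M1))"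

definition prefactor_exponent :: "int set \<Rightarrow> int set \<Rightarrow> real \<Rightarrow> real" where
  "prefactor_exponent M1 M2 b =
     (b + real (length (maya_pos M1)) + real (length (maya_pos M2)))
       * real (length (maya_neg M2) + length (maya_neg M1) + 1)"

lemma Omega_eq_weight:
  "Omega M1 M2 b g x =
     weight (prefactor_rate M1 M2) (prefactor_exponent M1 M2 b) x
       * wronskian (seed_functions M1 M2 b @ [g]) x"
  by (simp add: Omega_def weight_def prefactor_rate_def prefactor_exponent_def Let_def)

lemma Omega_reduction:
  assumes seeds: "seed_functions M1 M2 b @ [h] = As @ f0 # Bs"
    and f0: "\<And>y. 0 < y \<Longrightarrow> f0 y = weight d0 e0 y"
    and rel: "list_all2 (\<lambda>f (c, g). quotient_derivative (weight d0 e0) f c (weight d1 e1) g)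
                (As @ Bs) cgs"
    and seeds': "map snd cgs = seed_functions M1' M2' b' @ [h']" and "smooth_on_pos h'"
    and rate: "prefactor_rate M1 M2 + real (Suc (length cgs)) * d0 + real (length cgs) * d1 =
               prefactor_rate M1' M2'"
    and expo: "prefactor_exponent M1 M2 b + real (Suc (length cgs)) * e0 + real (length cgs) * e1 =
               prefactor_exponent M1' M2' b'"
    and factor: "prod_list (map fst cgs) = (-1) ^ j * c"
  shows "\<exists>s::real. (s = 1 \<or> s = -1) \<and> (\<forall>x>0. Omega M1 M2 b h x = s * c * Omega M1' M2' b' h' x)"
proof (intro exI[of _ "(-1) ^ (length As + j)"] conjI allI impI)
  show "(-1::real) ^ (length As + j) = 1 \<or> (-1::real) ^ (length As + j) = -1"
    by (cases "even (length As + j)") auto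
  fix x :: real
  assume x: "0 < x"
  have "weight (prefactor_rate M1 M2) (prefactor_exponent M1 M2 b) x
          * (weight d0 e0 x ^ Suc (length cgs) * weight d1 e1 x ^ length cgs)
        = weight (prefactor_rate M1' M2') (prefactor_exponent M1' M2' b') x"
    using x by (simp add: weight_power weight_mult rate[symmetric] expo[symmetric] algebra_simps)
  moreover have "wronskian (As @ f0 # Bs) x =
      (-1) ^ length As * weight d0 e0 x ^ Suc (length cgs) * weight d1 e1 x ^ length cgs
        * prod_list (map fst cgs) * wronskian (map snd cgs) x"
  proof (rule wronskian_reduction[OF smooth_on_pos_weight smooth_on_pos_weight x f0 rel])
    fix cg
    assume "cg \<in> set cgs"
    then have "snd cg \<in> set (map snd cgs)" by simp
    then show "smooth_on_pos (snd cg)"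
      using \<open>smooth_on_pos h'\<close> by (auto simp: seeds' intro: smooth_on_pos_seed_functions)
  qed
  ultimately show "Omega M1 M2 b h x = (-1) ^ (length As + j) * c * Omega M1' M2' b' h' x"
    unfolding Omega_eq_weight seeds seeds'[symmetric] factor
    by (simp add: power_add algebra_simps)
qed

(* The order of these rules matters: other orders make the simplifier loop together with
   field_simps. *)
lemmas weight_eq_simps = weight_def powr_minus minus_diff_commute exp_minus powr_add[symmetric]

lemma quotient_derivatives_shift_M1_down:
  assumes \<alpha>: "\<alpha> \<notin> \<int>"
  shows "quotient_derivative (weight 0 0) (\<lambda>x. laguerre (Suc n) \<alpha> x) (-1)
           (weight 0 0) (\<lambda>x. laguerre n (\<alpha> + 1) x)"
      (is ?q1)
    and "quotient_derivative (weight 0 0) (\<lambda>x. exp x * laguerre m \<alpha> (- x)) 1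
           (weight 0 0) (\<lambda>x. exp x * laguerre m (\<alpha> + 1) (- x))"
      (is ?q2)
    and "quotient_derivative (weight 0 0) (\<lambda>x. x powr (- \<alpha>) * laguerre m (- \<alpha>) x) (real m - \<alpha>)
           (weight 0 0) (\<lambda>x. x powr (- (\<alpha> + 1)) * laguerre m (- (\<alpha> + 1)) x)"
      (is ?q3)
    and "quotient_derivative (weight 0 0) (\<lambda>x. exp x * x powr (- \<alpha>) * laguerre m (- \<alpha>) (- x)) (real m + 1)
           (weight 0 0) (\<lambda>x. exp x * x powr (- (\<alpha> + 1)) * laguerre (Suc m) (- (\<alpha> + 1)) (- x))"
      (is ?q4)
    and "quotient_derivative (weight 0 0) (htilde \<alpha> lam) (- \<alpha>)
           (weight 0 0) (htilde (\<alpha> + 1) (lam - 1))"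
      (is ?q5)
proof -
  have params: "- \<alpha> - 1 = - (\<alpha> + 1)"
    "1 - \<alpha> - 1 = - \<alpha>"
    "1 - (\<alpha> + 1) = - \<alpha>"
    "- (lam - 1) - (\<alpha> + 1) = - lam - \<alpha>"
    by simp_all
  show ?q1
    apply (rule quotient_derivative_laguerre
        [where \<sigma> = "1" and d = "0" and e = "0" and Q = "\<lambda>y. y * laguerre n (\<alpha> + 1) y"])
      apply (simp add: weight_def)
     subgoal for y
       using deriv_laguerre_Suc[of n \<alpha> y]
       by (simp add: algebra_simps)
    by (simp add: weight_eq_simps field_simps)
  show ?q2
    apply (rule quotient_derivative_laguerre
        [where \<sigma> = "-1" and d = "1" and e = "0" and Q = "\<lambda>y. y * laguerre m (\<alpha> + 1) (- y)"])
      apply (simp add: weight_def)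
     subgoal for y
       using arg_cong[OF laguerre_raise_parameter[of m \<alpha> "- y"], of "\<lambda>t. y * t"]
       by (simp add: algebra_simps)
    by (simp add: weight_eq_simps field_simps)
  show ?q3
    apply (rule quotient_derivative_laguerre
        [where \<sigma> = "1" and d = "0" and e = "- \<alpha>" and Q = "laguerre m (- (\<alpha> + 1))"])
      apply (simp add: weight_def)
     subgoal for y
       using laguerre_lower_parameter[of "- \<alpha>" m y, unfolded params]
       by (simp add: algebra_simps)
    by (simp add: weight_eq_simps field_simps)
  show ?q4
    apply (rule quotient_derivative_laguerre
        [where \<sigma> = "-1" and d = "1" and e = "- \<alpha>" and Q = "\<lambda>y. laguerre (Suc m) (- (\<alpha> + 1)) (- y)"])
      apply (simp add: weight_def)
     subgoal for y
       using laguerre_raise_degree[of "- \<alpha>" "- y" m, unfolded params]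
       by (simp add: algebra_simps)
    by (simp add: weight_eq_simps field_simps)
  show ?q5
    unfolding htilde_def[abs_def] params
    apply (rule quotient_derivative_kummerM
        [where \<sigma> = "1" and d = "0" and e = "- \<alpha>" and Q = "kummerM (- lam - \<alpha>) (- \<alpha>)"])
      apply (simp add: weight_def)
     subgoal for y
       using kummerM_lower_b[OF not_Ints_one_minus[OF \<alpha>], of "- lam - \<alpha>" y, unfolded params]
       by (simp add: algebra_simps)
    by (simp add: weight_eq_simps field_simps)
qed

lemma quotient_derivatives_shift_M1_up:
  assumes \<alpha>: "\<alpha> \<notin> \<int>"
  shows "quotient_derivative (weight 1 (- \<alpha>)) (\<lambda>x. laguerre n \<alpha> x) (real n + 1)
           (weight (-1) (\<alpha> - 1)) (\<lambda>x. laguerre (Suc n) (\<alpha> - 1) x)"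
      (is ?q1)
    and "quotient_derivative (weight 1 (- \<alpha>)) (\<lambda>x. exp x * laguerre m \<alpha> (- x)) (real m + \<alpha>)
           (weight (-1) (\<alpha> - 1)) (\<lambda>x. exp x * laguerre m (\<alpha> - 1) (- x))"
      (is ?q2)
    and "quotient_derivative (weight 1 (- \<alpha>)) (\<lambda>x. x powr (- \<alpha>) * laguerre m (- \<alpha>) x) (-1)
           (weight (-1) (\<alpha> - 1)) (\<lambda>x. x powr (- (\<alpha> - 1)) * laguerre m (- (\<alpha> - 1)) x)"
      (is ?q3)
    and "quotient_derivative (weight 1 (- \<alpha>)) (\<lambda>x. exp x * x powr (- \<alpha>) * laguerre (Suc m) (- \<alpha>) (- x)) 1
           (weight (-1) (\<alpha> - 1)) (\<lambda>x. exp x * x powr (- (\<alpha> - 1)) * laguerre m (- (\<alpha> - 1)) (- x))"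
      (is ?q4)
    and "quotient_derivative (weight 1 (- \<alpha>)) (htilde \<alpha> lam) (- ((lam + 1) / (1 - \<alpha>)))
           (weight (-1) (\<alpha> - 1)) (htilde (\<alpha> - 1) (lam + 1))"
      (is ?q5)
proof -
  have params: "- \<alpha> + 1 = - (\<alpha> - 1)"
    "- (lam + 1) - (\<alpha> - 1) = - lam - \<alpha>"
    "1 - (\<alpha> - 1) = 1 - \<alpha> + 1"
    "(- lam - \<alpha> - (1 - \<alpha>)) / (1 - \<alpha>) = - ((lam + 1) / (1 - \<alpha>))"
    by (simp_all add: minus_divide_left)
  show ?q1
    apply (rule quotient_derivative_laguerre
        [where \<sigma> = "1" and d = "-1" and e = "\<alpha>" and Q = "laguerre (Suc n) (\<alpha> - 1)"])
      apply (simp add: weight_def)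
     subgoal for y
       using laguerre_raise_degree[of \<alpha> y n]
       by (simp add: algebra_simps)
    by (simp add: weight_eq_simps field_simps)
  show ?q2
    apply (rule quotient_derivative_laguerre
        [where \<sigma> = "-1" and d = "0" and e = "\<alpha>" and Q = "\<lambda>y. laguerre m (\<alpha> - 1) (- y)"])
      apply (simp add: weight_def)
     subgoal for y
       using laguerre_lower_parameter[of \<alpha> m "- y"]
       by (simp add: algebra_simps)
    by (simp add: weight_eq_simps field_simps)
  show ?q3
    apply (rule quotient_derivative_laguerre
        [where \<sigma> = "1" and d = "-1" and e = "0" and Q = "\<lambda>y. y * laguerre m (- (\<alpha> - 1)) y"])
      apply (simp add: weight_def)
     subgoal for y
       using arg_cong[OF laguerre_raise_parameter[of m "- \<alpha>" y, unfolded params], of "\<lambda>t. y * t"]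
       by (simp add: algebra_simps)
    by (simp add: weight_eq_simps field_simps)
  show ?q4
    apply (rule quotient_derivative_laguerre
        [where \<sigma> = "-1" and d = "0" and e = "0" and Q = "\<lambda>y. y * laguerre m (- (\<alpha> - 1)) (- y)"])
      apply (simp add: weight_def)
     subgoal for y
       using deriv_laguerre_Suc[of m "- \<alpha>" "- y", unfolded params]
       by (simp add: algebra_simps)
    by (simp add: weight_eq_simps field_simps)
  show ?q5
    unfolding htilde_def[abs_def] params
    apply (rule quotient_derivative_kummerM
        [where \<sigma> = "1" and d = "-1" and e = "0" and Q = "\<lambda>y. y * kummerM (- lam - \<alpha>) (1 - \<alpha> + 1) y"])
      apply (simp add: weight_def)
     subgoal for y
       using arg_cong[OF kummerM_raise_b[OF not_Ints_one_minus[OF \<alpha>], of "- lam - \<alpha>" y, unfolded params],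
           of "\<lambda>t. y * t"]
       by (simp add: algebra_simps)
    by (simp add: weight_eq_simps field_simps)
qed

lemma quotient_derivatives_shift_M2_down:
  assumes \<alpha>: "\<alpha> \<notin> \<int>"
  shows "quotient_derivative (weight 1 0) (\<lambda>x. laguerre n \<alpha> x) (-1)
           (weight (-1) 0) (\<lambda>x. laguerre n (\<alpha> + 1) x)"
      (is ?q1)
    and "quotient_derivative (weight 1 0) (\<lambda>x. exp x * laguerre (Suc m) \<alpha> (- x)) 1
           (weight (-1) 0) (\<lambda>x. exp x * laguerre m (\<alpha> + 1) (- x))"
      (is ?q2)
    and "quotient_derivative (weight 1 0) (\<lambda>x. x powr (- \<alpha>) * laguerre m (- \<alpha>) x) (real m + 1)
           (weight (-1) 0) (\<lambda>x. x powr (- (\<alpha> + 1)) * laguerre (Suc m) (- (\<alpha> + 1)) x)"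
      (is ?q3)
    and "quotient_derivative (weight 1 0) (\<lambda>x. exp x * x powr (- \<alpha>) * laguerre m (- \<alpha>) (- x)) (real m - \<alpha>)
           (weight (-1) 0) (\<lambda>x. exp x * x powr (- (\<alpha> + 1)) * laguerre m (- (\<alpha> + 1)) (- x))"
      (is ?q4)
    and "quotient_derivative (weight 1 0) (htilde \<alpha> lam) (- \<alpha>)
           (weight (-1) 0) (htilde (\<alpha> + 1) lam)"
      (is ?q5)
proof -
  have params: "- \<alpha> - 1 = - (\<alpha> + 1)"
    "1 - \<alpha> - 1 = - \<alpha>"
    "1 - (\<alpha> + 1) = - \<alpha>"
    "- lam - (\<alpha> + 1) = - lam - \<alpha> - 1"
    by simp_all
  show ?q1
    apply (rule quotient_derivative_laguerre
        [where \<sigma> = "1" and d = "-1" and e = "0" and Q = "\<lambda>y. y * laguerre n (\<alpha> + 1) y"])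
      apply (simp add: weight_def)
     subgoal for y
       using arg_cong[OF laguerre_raise_parameter[of n \<alpha> y], of "\<lambda>t. y * t"]
       by (simp add: algebra_simps)
    by (simp add: weight_eq_simps field_simps)
  show ?q2
    apply (rule quotient_derivative_laguerre
        [where \<sigma> = "-1" and d = "0" and e = "0" and Q = "\<lambda>y. y * laguerre m (\<alpha> + 1) (- y)"])
      apply (simp add: weight_def)
     subgoal for y
       using deriv_laguerre_Suc[of m \<alpha> "- y"]
       by (simp add: algebra_simps)
    by (simp add: weight_eq_simps field_simps)
  show ?q3
    apply (rule quotient_derivative_laguerre
        [where \<sigma> = "1" and d = "-1" and e = "- \<alpha>" and Q = "laguerre (Suc m) (- (\<alpha> + 1))"])
      apply (simp add: weight_def)
     subgoal for y
       using laguerre_raise_degree[of "- \<alpha>" y m, unfolded params]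
       by (simp add: algebra_simps)
    by (simp add: weight_eq_simps field_simps)
  show ?q4
    apply (rule quotient_derivative_laguerre
        [where \<sigma> = "-1" and d = "0" and e = "- \<alpha>" and Q = "\<lambda>y. laguerre m (- (\<alpha> + 1)) (- y)"])
      apply (simp add: weight_def)
     subgoal for y
       using laguerre_lower_parameter[of "- \<alpha>" m "- y", unfolded params]
       by (simp add: algebra_simps)
    by (simp add: weight_eq_simps field_simps)
  show ?q5
    unfolding htilde_def[abs_def] params
    apply (rule quotient_derivative_kummerM
        [where \<sigma> = "1" and d = "-1" and e = "- \<alpha>" and Q = "kummerM (- lam - \<alpha> - 1) (- \<alpha>)"])
      apply (simp add: weight_def)
     subgoal for y
       using kummerM_lower_ab[OF not_Ints_one_minus[OF \<alpha>], where a = "- lam - \<alpha>" and y = y, unfolded params]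
       by (simp add: algebra_simps)
    by (simp add: weight_eq_simps field_simps)
qed

lemma quotient_derivatives_shift_M2_up:
  assumes \<alpha>: "\<alpha> \<notin> \<int>"
  shows "quotient_derivative (weight 0 (- \<alpha>)) (\<lambda>x. laguerre n \<alpha> x) (real n + \<alpha>)
           (weight 0 (\<alpha> - 1)) (\<lambda>x. laguerre n (\<alpha> - 1) x)"
      (is ?q1)
    and "quotient_derivative (weight 0 (- \<alpha>)) (\<lambda>x. exp x * laguerre m \<alpha> (- x)) (real m + 1)
           (weight 0 (\<alpha> - 1)) (\<lambda>x. exp x * laguerre (Suc m) (\<alpha> - 1) (- x))"
      (is ?q2)
    and "quotient_derivative (weight 0 (- \<alpha>)) (\<lambda>x. x powr (- \<alpha>) * laguerre (Suc m) (- \<alpha>) x) (-1)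
           (weight 0 (\<alpha> - 1)) (\<lambda>x. x powr (- (\<alpha> - 1)) * laguerre m (- (\<alpha> - 1)) x)"
      (is ?q3)
    and "quotient_derivative (weight 0 (- \<alpha>)) (\<lambda>x. exp x * x powr (- \<alpha>) * laguerre m (- \<alpha>) (- x)) 1
           (weight 0 (\<alpha> - 1)) (\<lambda>x. exp x * x powr (- (\<alpha> - 1)) * laguerre m (- (\<alpha> - 1)) (- x))"
      (is ?q4)
    and "quotient_derivative (weight 0 (- \<alpha>)) (htilde \<alpha> lam) ((- lam - \<alpha>) / (1 - \<alpha>))
           (weight 0 (\<alpha> - 1)) (htilde (\<alpha> - 1) lam)"
      (is ?q5)
proof -
  have params: "- \<alpha> + 1 = - (\<alpha> - 1)"
    "- lam - (\<alpha> - 1) = - lam - \<alpha> + 1"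
    "1 - (\<alpha> - 1) = 1 - \<alpha> + 1"
    by simp_all
  show ?q1
    apply (rule quotient_derivative_laguerre
        [where \<sigma> = "1" and d = "0" and e = "\<alpha>" and Q = "laguerre n (\<alpha> - 1)"])
      apply (simp add: weight_def)
     subgoal for y
       using laguerre_lower_parameter[of \<alpha> n y]
       by (simp add: algebra_simps)
    by (simp add: weight_eq_simps field_simps)
  show ?q2
    apply (rule quotient_derivative_laguerre
        [where \<sigma> = "-1" and d = "1" and e = "\<alpha>" and Q = "\<lambda>y. laguerre (Suc m) (\<alpha> - 1) (- y)"])
      apply (simp add: weight_def)
     subgoal for y
       using laguerre_raise_degree[of \<alpha> "- y" m]
       by (simp add: algebra_simps)
    by (simp add: weight_eq_simps field_simps)
  show ?q3
    apply (rule quotient_derivative_laguerre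
        [where \<sigma> = "1" and d = "0" and e = "0" and Q = "\<lambda>y. y * laguerre m (- (\<alpha> - 1)) y"])
      apply (simp add: weight_def)
     subgoal for y
       using deriv_laguerre_Suc[of m "- \<alpha>" y, unfolded params]
       by (simp add: algebra_simps)
    by (simp add: weight_eq_simps field_simps)
  show ?q4
    apply (rule quotient_derivative_laguerre
        [where \<sigma> = "-1" and d = "1" and e = "0" and Q = "\<lambda>y. y * laguerre m (- (\<alpha> - 1)) (- y)"])
      apply (simp add: weight_def)
     subgoal for y
       using arg_cong[OF laguerre_raise_parameter[of m "- \<alpha>" "- y", unfolded params], of "\<lambda>t. y * t"]
       by (simp add: algebra_simps)
    by (simp add: weight_eq_simps field_simps)
  show ?q5
    unfolding htilde_def[abs_def] params
    apply (rule quotient_derivative_kummerM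
        [where \<sigma> = "1" and d = "0" and e = "0" and Q = "\<lambda>y. y * kummerM (- lam - \<alpha> + 1) (1 - \<alpha> + 1) y"])
      apply (simp add: weight_def)
     subgoal for y
       using deriv_kummerM_shift[of "- lam - \<alpha>" "1 - \<alpha>" y]
       by (simp add: algebra_simps)
    by (simp add: weight_eq_simps field_simps)
qed

lemma Omega_shift_M1_down:
  assumes M: "maya M1" and z: "0 \<in> M1" and \<alpha>: "\<alpha> \<notin> \<int>"
  shows "\<exists>s::real. (s = 1 \<or> s = -1) \<and> (\<forall>x>0.
        Omega M1 M2 \<alpha> (htilde \<alpha> lam) x =
          s * ((- \<alpha>) * (\<Prod>m'\<leftarrow>maya_neg M2. real m' - \<alpha>) * (\<Prod>n'\<leftarrow>maya_neg M1. real n' + 1))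
            * Omega (maya_shift M1 (-1)) M2 (\<alpha> + 1) (htilde (\<alpha> + 1) (lam - 1)) x)"
proof -
  note shift = maya_shift_down[OF M z]
  define As where "As = map (\<lambda>n x. laguerre (Suc n) \<alpha> x) (maya_pos (maya_shift M1 (-1)))"
  define Bs where "Bs = map (\<lambda>m x. exp x * laguerre m \<alpha> (- x)) (maya_pos M2)
      @ map (\<lambda>m x. x powr (- \<alpha>) * laguerre m (- \<alpha>) x) (maya_neg M2)
      @ map (\<lambda>m x. exp x * x powr (- \<alpha>) * laguerre m (- \<alpha>) (- x)) (maya_neg M1) @ [htilde \<alpha> lam]"
  define cgs where "cgs = map (\<lambda>n. (-1, \<lambda>x. laguerre n (\<alpha> + 1) x)) (maya_pos (maya_shift M1 (-1)))
      @ map (\<lambda>m. (1, \<lambda>x. exp x * laguerre m (\<alpha> + 1) (- x))) (maya_pos M2)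
      @ map (\<lambda>m. (real m - \<alpha>, \<lambda>x. x powr (- (\<alpha> + 1)) * laguerre m (- (\<alpha> + 1)) x)) (maya_neg M2)
      @ map (\<lambda>m. (real m + 1, \<lambda>x. exp x * x powr (- (\<alpha> + 1)) * laguerre (Suc m) (- (\<alpha> + 1)) (- x))) (maya_neg M1)
      @ [(- \<alpha>, htilde (\<alpha> + 1) (lam - 1))]"
  have seeds: "seed_functions M1 M2 \<alpha> @ [htilde \<alpha> lam] =
      As @ (\<lambda>x. laguerre 0 \<alpha> x) # Bs"
    by (simp add: seed_functions_def shift As_def Bs_def)
  have rel: "list_all2 (\<lambda>f (c, g). quotient_derivative (weight 0 0) f c (weight 0 0) g)
      (As @ Bs) cgs"
    unfolding As_def Bs_def cgs_def append_assoc
    by (intro list_all2_appendI)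
       (simp_all add: list.rel_map list_all2_same quotient_derivatives_shift_M1_down[OF \<alpha>, simplified])
  have seeds': "map snd cgs =
      seed_functions (maya_shift M1 (-1)) M2 (\<alpha> + 1) @ [htilde (\<alpha> + 1) (lam - 1)]"
    by (simp add: cgs_def seed_functions_def shift comp_def)
  have factor: "prod_list (map fst cgs) =
      (-1) ^ length (maya_pos (maya_shift M1 (-1))) *
        ((- \<alpha>) * (\<Prod>m'\<leftarrow>maya_neg M2. real m' - \<alpha>) * (\<Prod>n'\<leftarrow>maya_neg M1. real n' + 1))"
    by (simp add: cgs_def comp_def map_replicate_const)
  show ?thesis
    by (rule Omega_reduction[OF seeds _ rel seeds' smooth_on_pos_htilde _ _ factor])
       (simp_all add: weight_def laguerre_0 cgs_def prefactor_rate_def prefactor_exponent_def shift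
          algebra_simps)
qed

lemma Omega_shift_M1_up:
  assumes M: "maya M1" and z: "-1 \<notin> M1" and \<alpha>: "\<alpha> \<notin> \<int>"
  shows "\<exists>s::real. (s = 1 \<or> s = -1) \<and> (\<forall>x>0.
        Omega M1 M2 \<alpha> (htilde \<alpha> lam) x =
          s * ((lam + 1) / (1 - \<alpha>) * (\<Prod>n\<leftarrow>maya_pos M1. real n + 1) * (\<Prod>m\<leftarrow>maya_pos M2. real m + \<alpha>))
            * Omega (maya_shift M1 1) M2 (\<alpha> - 1) (htilde (\<alpha> - 1) (lam + 1)) x)"
proof -
  note shift = maya_shift_up[OF M z]
  define As where "As = map (\<lambda>n x. laguerre n \<alpha> x) (maya_pos M1)
      @ map (\<lambda>m x. exp x * laguerre m \<alpha> (- x)) (maya_pos M2)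
      @ map (\<lambda>m x. x powr (- \<alpha>) * laguerre m (- \<alpha>) x) (maya_neg M2)
      @ map (\<lambda>m x. exp x * x powr (- \<alpha>) * laguerre (Suc m) (- \<alpha>) (- x)) (maya_neg (maya_shift M1 1))"
  define Bs where "Bs = [htilde \<alpha> lam]"
  define cgs where "cgs = map (\<lambda>n. (real n + 1, \<lambda>x. laguerre (Suc n) (\<alpha> - 1) x)) (maya_pos M1)
      @ map (\<lambda>m. (real m + \<alpha>, \<lambda>x. exp x * laguerre m (\<alpha> - 1) (- x))) (maya_pos M2)
      @ map (\<lambda>m. (-1, \<lambda>x. x powr (- (\<alpha> - 1)) * laguerre m (- (\<alpha> - 1)) x)) (maya_neg M2)
      @ map (\<lambda>m. (1, \<lambda>x. exp x * x powr (- (\<alpha> - 1)) * laguerre m (- (\<alpha> - 1)) (- x))) (maya_neg (maya_shift M1 1))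
      @ [(- ((lam + 1) / (1 - \<alpha>)), htilde (\<alpha> - 1) (lam + 1))]"
  have seeds: "seed_functions M1 M2 \<alpha> @ [htilde \<alpha> lam] =
      As @ (\<lambda>x. exp x * x powr (- \<alpha>) * laguerre 0 (- \<alpha>) (- x)) # Bs"
    by (simp add: seed_functions_def shift As_def Bs_def)
  have rel: "list_all2 (\<lambda>f (c, g). quotient_derivative (weight 1 (- \<alpha>)) f c (weight (-1) (\<alpha> - 1)) g)
      (As @ Bs) cgs"
    unfolding As_def Bs_def cgs_def append_assoc
    by (intro list_all2_appendI)
       (simp_all add: list.rel_map list_all2_same quotient_derivatives_shift_M1_up[OF \<alpha>, simplified])
  have seeds': "map snd cgs =
      seed_functions (maya_shift M1 1) M2 (\<alpha> - 1) @ [htilde (\<alpha> - 1) (lam + 1)]"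
    by (simp add: cgs_def seed_functions_def shift comp_def)
  have factor: "prod_list (map fst cgs) =
      (-1) ^ Suc (length (maya_neg M2)) *
        ((lam + 1) / (1 - \<alpha>) * (\<Prod>n\<leftarrow>maya_pos M1. real n + 1) * (\<Prod>m\<leftarrow>maya_pos M2. real m + \<alpha>))"
    by (simp add: cgs_def comp_def map_replicate_const)
  show ?thesis
    by (rule Omega_reduction[OF seeds _ rel seeds' smooth_on_pos_htilde _ _ factor])
       (simp_all add: weight_def laguerre_0 cgs_def prefactor_rate_def prefactor_exponent_def shift
          algebra_simps)
qed

lemma Omega_shift_M2_down:
  assumes M: "maya M2" and z: "0 \<in> M2" and \<alpha>: "\<alpha> \<notin> \<int>"
  shows "\<exists>s::real. (s = 1 \<or> s = -1) \<and> (\<forall>x>0.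
        Omega M1 M2 \<alpha> (htilde \<alpha> lam) x =
          s * ((- \<alpha>) * (\<Prod>m'\<leftarrow>maya_neg M2. real m' + 1) * (\<Prod>n'\<leftarrow>maya_neg M1. real n' - \<alpha>))
            * Omega M1 (maya_shift M2 (-1)) (\<alpha> + 1) (htilde (\<alpha> + 1) lam) x)"
proof -
  note shift = maya_shift_down[OF M z]
  define As where "As = map (\<lambda>n x. laguerre n \<alpha> x) (maya_pos M1)
      @ map (\<lambda>m x. exp x * laguerre (Suc m) \<alpha> (- x)) (maya_pos (maya_shift M2 (-1)))"
  define Bs where "Bs = map (\<lambda>m x. x powr (- \<alpha>) * laguerre m (- \<alpha>) x) (maya_neg M2)
      @ map (\<lambda>m x. exp x * x powr (- \<alpha>) * laguerre m (- \<alpha>) (- x)) (maya_neg M1) @ [htilde \<alpha> lam]"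
  define cgs where "cgs = map (\<lambda>n. (-1, \<lambda>x. laguerre n (\<alpha> + 1) x)) (maya_pos M1)
      @ map (\<lambda>m. (1, \<lambda>x. exp x * laguerre m (\<alpha> + 1) (- x))) (maya_pos (maya_shift M2 (-1)))
      @ map (\<lambda>m. (real m + 1, \<lambda>x. x powr (- (\<alpha> + 1)) * laguerre (Suc m) (- (\<alpha> + 1)) x)) (maya_neg M2)
      @ map (\<lambda>m. (real m - \<alpha>, \<lambda>x. exp x * x powr (- (\<alpha> + 1)) * laguerre m (- (\<alpha> + 1)) (- x))) (maya_neg M1)
      @ [(- \<alpha>, htilde (\<alpha> + 1) lam)]"
  have seeds: "seed_functions M1 M2 \<alpha> @ [htilde \<alpha> lam] =
      As @ (\<lambda>x. exp x * laguerre 0 \<alpha> (- x)) # Bs"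
    by (simp add: seed_functions_def shift As_def Bs_def)
  have rel: "list_all2 (\<lambda>f (c, g). quotient_derivative (weight 1 0) f c (weight (-1) 0) g)
      (As @ Bs) cgs"
    unfolding As_def Bs_def cgs_def append_assoc
    by (intro list_all2_appendI)
       (simp_all add: list.rel_map list_all2_same quotient_derivatives_shift_M2_down[OF \<alpha>, simplified])
  have seeds': "map snd cgs =
      seed_functions M1 (maya_shift M2 (-1)) (\<alpha> + 1) @ [htilde (\<alpha> + 1) lam]"
    by (simp add: cgs_def seed_functions_def shift comp_def)
  have factor: "prod_list (map fst cgs) =
      (-1) ^ length (maya_pos M1) *
        ((- \<alpha>) * (\<Prod>m'\<leftarrow>maya_neg M2. real m' + 1) * (\<Prod>n'\<leftarrow>maya_neg M1. real n' - \<alpha>))"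
    by (simp add: cgs_def comp_def map_replicate_const)
  show ?thesis
    by (rule Omega_reduction[OF seeds _ rel seeds' smooth_on_pos_htilde _ _ factor])
       (simp_all add: weight_def laguerre_0 cgs_def prefactor_rate_def prefactor_exponent_def shift
          algebra_simps)
qed

lemma Omega_shift_M2_up:
  assumes M: "maya M2" and z: "-1 \<notin> M2" and \<alpha>: "\<alpha> \<notin> \<int>"
  shows "\<exists>s::real. (s = 1 \<or> s = -1) \<and> (\<forall>x>0.
        Omega M1 M2 \<alpha> (htilde \<alpha> lam) x =
          s * ((- lam - \<alpha>) / (1 - \<alpha>) * (\<Prod>n\<leftarrow>maya_pos M1. real n + \<alpha>) * (\<Prod>m\<leftarrow>maya_pos M2. real m + 1))
            * Omega M1 (maya_shift M2 1) (\<alpha> - 1) (htilde (\<alpha> - 1) lam) x)"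
proof -
  note shift = maya_shift_up[OF M z]
  define As where "As = map (\<lambda>n x. laguerre n \<alpha> x) (maya_pos M1)
      @ map (\<lambda>m x. exp x * laguerre m \<alpha> (- x)) (maya_pos M2)
      @ map (\<lambda>m x. x powr (- \<alpha>) * laguerre (Suc m) (- \<alpha>) x) (maya_neg (maya_shift M2 1))"
  define Bs where "Bs = map (\<lambda>m x. exp x * x powr (- \<alpha>) * laguerre m (- \<alpha>) (- x)) (maya_neg M1)
      @ [htilde \<alpha> lam]"
  define cgs where "cgs = map (\<lambda>n. (real n + \<alpha>, \<lambda>x. laguerre n (\<alpha> - 1) x)) (maya_pos M1)
      @ map (\<lambda>m. (real m + 1, \<lambda>x. exp x * laguerre (Suc m) (\<alpha> - 1) (- x))) (maya_pos M2)
      @ map (\<lambda>m. (-1, \<lambda>x. x powr (- (\<alpha> - 1)) * laguerre m (- (\<alpha> - 1)) x)) (maya_neg (maya_shift M2 1))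
      @ map (\<lambda>m. (1, \<lambda>x. exp x * x powr (- (\<alpha> - 1)) * laguerre m (- (\<alpha> - 1)) (- x))) (maya_neg M1)
      @ [((- lam - \<alpha>) / (1 - \<alpha>), htilde (\<alpha> - 1) lam)]"
  have seeds: "seed_functions M1 M2 \<alpha> @ [htilde \<alpha> lam] =
      As @ (\<lambda>x. x powr (- \<alpha>) * laguerre 0 (- \<alpha>) x) # Bs"
    by (simp add: seed_functions_def shift As_def Bs_def)
  have rel: "list_all2 (\<lambda>f (c, g). quotient_derivative (weight 0 (- \<alpha>)) f c (weight 0 (\<alpha> - 1)) g)
      (As @ Bs) cgs"
    unfolding As_def Bs_def cgs_def append_assoc
    by (intro list_all2_appendI)
       (simp_all add: list.rel_map list_all2_same quotient_derivatives_shift_M2_up[OF \<alpha>, simplified])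
  have seeds': "map snd cgs =
      seed_functions M1 (maya_shift M2 1) (\<alpha> - 1) @ [htilde (\<alpha> - 1) lam]"
    by (simp add: cgs_def seed_functions_def shift comp_def)
  have factor: "prod_list (map fst cgs) =
      (-1) ^ length (maya_neg (maya_shift M2 1)) *
        ((- lam - \<alpha>) / (1 - \<alpha>) * (\<Prod>n\<leftarrow>maya_pos M1. real n + \<alpha>) * (\<Prod>m\<leftarrow>maya_pos M2. real m + 1))"
    by (simp add: cgs_def comp_def map_replicate_const)
  show ?thesis
    by (rule Omega_reduction[OF seeds _ rel seeds' smooth_on_pos_htilde _ _ factor])
       (simp_all add: weight_def laguerre_0 cgs_def prefactor_rate_def prefactor_exponent_def shift
          algebra_simps)
qed

theorem corollary5p6:
  fixes M1 M2 :: "int set" and \<alpha> lam :: real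
  assumes "maya M1" and "maya M2" and "\<alpha> \<notin> \<int>"
  shows
   "(maya_pos M1 \<noteq> [] \<and> last (maya_pos M1) = 0 \<longrightarrow>
      (\<exists>s::real. (s = 1 \<or> s = -1) \<and> (\<forall>x>0.
        Omega M1 M2 \<alpha> (htilde \<alpha> lam) x =
          s * ((- \<alpha>) * (\<Prod>m'\<leftarrow>maya_neg M2. real m' - \<alpha>) * (\<Prod>n'\<leftarrow>maya_neg M1. real n' + 1))
            * Omega (maya_shift M1 (-1)) M2 (\<alpha> + 1) (htilde (\<alpha> + 1) (lam - 1)) x)))
  \<and> (maya_neg M1 \<noteq> [] \<and> last (maya_neg M1) = 0 \<longrightarrow>
      (\<exists>s::real. (s = 1 \<or> s = -1) \<and> (\<forall>x>0.
        Omega M1 M2 \<alpha> (htilde \<alpha> lam) x =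
          s * ((lam + 1) / (1 - \<alpha>) * (\<Prod>n\<leftarrow>maya_pos M1. real n + 1) * (\<Prod>m\<leftarrow>maya_pos M2. real m + \<alpha>))
            * Omega (maya_shift M1 1) M2 (\<alpha> - 1) (htilde (\<alpha> - 1) (lam + 1)) x)))
  \<and> (maya_pos M2 \<noteq> [] \<and> last (maya_pos M2) = 0 \<longrightarrow>
      (\<exists>s::real. (s = 1 \<or> s = -1) \<and> (\<forall>x>0.
        Omega M1 M2 \<alpha> (htilde \<alpha> lam) x =
          s * ((- \<alpha>) * (\<Prod>m'\<leftarrow>maya_neg M2. real m' + 1) * (\<Prod>n'\<leftarrow>maya_neg M1. real n' - \<alpha>))
            * Omega M1 (maya_shift M2 (-1)) (\<alpha> + 1) (htilde (\<alpha> + 1) lam) x)))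
  \<and> (maya_neg M2 \<noteq> [] \<and> last (maya_neg M2) = 0 \<longrightarrow>
      (\<exists>s::real. (s = 1 \<or> s = -1) \<and> (\<forall>x>0.
        Omega M1 M2 \<alpha> (htilde \<alpha> lam) x =
          s * ((- lam - \<alpha>) / (1 - \<alpha>) * (\<Prod>n\<leftarrow>maya_pos M1. real n + \<alpha>) * (\<Prod>m\<leftarrow>maya_pos M2. real m + 1))
            * Omega M1 (maya_shift M2 1) (\<alpha> - 1) (htilde (\<alpha> - 1) lam) x)))"
  by (intro conjI impI)
     (erule Omega_shift_M1_down[OF assms(1) zero_mem_if_last_maya_pos[OF assms(1)] assms(3)]
        Omega_shift_M1_up[OF assms(1) minus_one_not_mem_if_last_maya_neg[OF assms(1)] assms(3)]
        Omega_shift_M2_down[OF assms(2) zero_mem_if_last_maya_pos[OF assms(2)] assms(3)]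
        Omega_shift_M2_up[OF assms(2) minus_one_not_mem_if_last_maya_neg[OF assms(2)] assms(3)])+

end
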